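(* $\mathsf{sTC}_{\mathbb{N}^\mathbb{N}} \le_{\mathrm{W}} \mathsf{FindHS}_{\boldsymbol{\Sigma}^0_1}$ and hence $\chi_{\Pi^1_1}<_{\mathrm{W}}\mathsf{FindHS}_{\boldsymbol{\Sigma}^0_1}$.
   Context: Weihrauch reducibility: $f\le_{\mathrm{W}} g$ iff there are computable $\Phi,\Psi$ on Baire space such that for every realizer $G$ of $g$, $p\mapsto\Psi(\langle p,G\Phi(p)\rangle)$ realizes $f$; $<_{\mathrm{W}}$ is strict reducibility. The Ramsey space $[\mathbb{N}]^\mathbb{N}$ is the set of strictly increasing functions $\mathbb{N}\to\mathbb{N}$ with Baire-space topology; $fg=f\circ g$. For $P\subseteq[\mathbb{N}]^\mathbb{N}$, $f$ is homogeneous for $P$ if either $fg\in P$ for all $g\in[\mathbb{N}]^\mathbb{N}$ or $fg\notin P$ for all $g$; $\mathrm{HS}(P)$ is the set of homogeneous solutions. Open sets of $[\mathbb{N}]^\mathbb{N}$ are named by enumerations of sets of finite strictly increasing strings whose cones have union the set. $\mathsf{FindHS}_{\boldsymbol{\Sigma}^0_1}$: input an open $P$ with $\mathrm{HS}(P)\cap P\ne\emptyset$, output any element of $\mathrm{HS}(P)\cap P$. $\mathsf{sTC}_{\mathbb{N}^\mathbb{N}}$: given a name (a tree on $\mathbb{N}$) of a closed $A\subseteq\mathbb{N}^\mathbb{N}$, output $(b,x)\in\{0,1\}\times\mathbb{N}^\mathbb{N}$ with ($b=0\Rightarrow A=\emptyset$) and ($b=1\Rightarrow x\in A$). $\chi_{\Pi^1_1}:\mathbb{N}^\mathbb{N}\to\{0,1\}$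 is the characteristic function of a $\Pi^1_1$-complete set (equivalently, decide whether a given tree on $\mathbb{N}$ is well-founded). *)

theory Defs
  imports Main "HOL-Library.Nat_Bijection"
begin

datatype recf = RZ | RSuc | RProj nat | RComp recf "recf list" | RPrim recf recf | RMn recf

inductive reval :: "recf \<Rightarrow> nat list \<Rightarrow> nat \<Rightarrow> bool" where
  rz: "reval RZ xs 0"
| rsuc: "reval RSuc (x # xs) (Suc x)"
| rproj: "i < length xs \<Longrightarrow> reval (RProj i) xs (xs ! i)"
| rcomp: "list_all2 (\<lambda>g y. reval g xs y) gs ys \<Longrightarrow> reval f ys z \<Longrightarrow> reval (RComp f gs) xs z"
| rprim0: "reval f xs y \<Longrightarrow> reval (RPrim f g) (0 # xs) y"
| rprimS: "reval (RPrim f g) (n # xs) y \<Longrightarrow> reval g (y # n # xs) z \<Longrightarrow> reval (RPrim f g) (Suc n # xs) z"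
| rmn: "reval f (n # xs) 0 \<Longrightarrow> (\<forall>m<n. \<exists>y. y > 0 \<and> reval f (m # xs) y) \<Longrightarrow> reval (RMn f) xs n"

definition computable_nat :: "(nat \<Rightarrow> nat) \<Rightarrow> bool" where
  "computable_nat h \<longleftrightarrow> (\<exists>c. \<forall>n. reval c [n] (h n))"

type_synonym baire = "nat \<Rightarrow> nat"

definition prefix_code :: "baire \<Rightarrow> nat \<Rightarrow> nat" where
  "prefix_code p k = list_encode (map p [0..<k])"

definition assoc_out :: "(nat \<Rightarrow> nat) \<Rightarrow> baire \<Rightarrow> nat \<Rightarrow> nat \<Rightarrow> nat" where
  "assoc_out \<alpha> p n k = \<alpha> (prod_encode (n, prefix_code p k))"

text \<open>The partial functional on Baire space with associate alpha maps p to q: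
  q n = alpha(<n, p|k>) - 1 for the least k with alpha(<n, p|k>) > 0.\<close>
definition assoc_val :: "(nat \<Rightarrow> nat) \<Rightarrow> baire \<Rightarrow> baire \<Rightarrow> bool" where
  "assoc_val \<alpha> p q \<longleftrightarrow> (\<forall>n. \<exists>k. assoc_out \<alpha> p n k > 0 \<and> (\<forall>j<k. assoc_out \<alpha> p n j = 0)
                              \<and> q n = assoc_out \<alpha> p n k - 1)"

definition bpair :: "baire \<Rightarrow> baire \<Rightarrow> baire" where
  "bpair p q = (\<lambda>n. if even n then p (n div 2) else q (n div 2))"

text \<open>A problem is given by its set of names of instances and, for each instance name,
  the predicate describing names of admissible solutions.\<close>
record problem =
  pdom :: "baire set"
  psol :: "baire \<Rightarrow> baire \<Rightarrow> bool"

definition realizes :: "(baire \<Rightarrow> baire) \<Rightarrow> problem \<Rightarrow> bool" where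
  "realizes G f \<longleftrightarrow> (\<forall>p\<in>pdom f. psol f p (G p))"

text \<open>Realizers are represented as total
  HOL functions; their values outside the domain are irrelevant.\<close>
definition weihrauch_le :: "problem \<Rightarrow> problem \<Rightarrow> bool" (infix "\<le>\<^sub>W" 50) where
  "f \<le>\<^sub>W g \<longleftrightarrow> (\<exists>\<alpha> \<beta>. computable_nat \<alpha> \<and> computable_nat \<beta> \<and>
     (\<forall>G. realizes G g \<longrightarrow>
        (\<forall>p\<in>pdom f. \<exists>q. assoc_val \<alpha> p q \<and> q \<in> pdom g \<and>
            (\<exists>r. assoc_val \<beta> (bpair p (G q)) r \<and> psol f p r))))"

definition weihrauch_less :: "problem \<Rightarrow> problem \<Rightarrow> bool" (infix "<\<^sub>W" 50) where
  "f <\<^sub>W g \<longleftrightarrow> f \<le>\<^sub>W g \<and> \<not> g \<le>\<^sub>W f"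

definition ramsey :: "baire set" where
  "ramsey = {f. strict_mono f}"

definition homogeneous :: "baire set \<Rightarrow> baire \<Rightarrow> bool" where
  "homogeneous P f \<longleftrightarrow> f \<in> ramsey \<and>
     ((\<forall>g\<in>ramsey. f \<circ> g \<in> P) \<or> (\<forall>g\<in>ramsey. f \<circ> g \<notin> P))"

definition HS :: "baire set \<Rightarrow> baire set" where
  "HS P = {f. homogeneous P f}"

text \<open>A name p enumerates a set of finite strings: p n = 0 lists nothing, p n = c + 1 lists the
  string with code c (list_encode).  The named open set is the union of the cones
  (within the Ramsey space) of the listed strings; cones of non-increasing strings are empty.\<close>
definition listed_strings :: "baire \<Rightarrow> nat list set" where
  "listed_strings p = {s. \<exists>n. p n = Suc (list_encode s)}"

definition cone :: "nat list \<Rightarrow> baire set" where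
  "cone s = {f \<in> ramsey. map f [0..<length s] = s}"

definition open_named :: "baire \<Rightarrow> baire set" where
  "open_named p = (\<Union>s\<in>listed_strings p. cone s)"

definition FindHS_Sigma01 :: problem where
  "FindHS_Sigma01 = \<lparr> pdom = {p. HS (open_named p) \<inter> open_named p \<noteq> {}},
                      psol = (\<lambda>p r. r \<in> HS (open_named p) \<inter> open_named p) \<rparr>"

definition tree_of :: "baire \<Rightarrow> nat list set" where
  "tree_of p = {s. p (list_encode s) = 1}"

definition is_tree_name :: "baire \<Rightarrow> bool" where
  "is_tree_name p \<longleftrightarrow> (\<forall>c. p c \<le> 1) \<and>
     (\<forall>s t. s @ t \<in> tree_of p \<longrightarrow> s \<in> tree_of p)"

definition body :: "nat list set \<Rightarrow> baire set" where
  "body T = {x. \<forall>n. map x [0..<n] \<in> T}"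

text \<open>Output (b,x) in {0,1} x N^N is named by r with b = r 0 and x = (n |-> r (n+1)).\<close>
definition sTC_Baire :: problem where
  "sTC_Baire = \<lparr> pdom = {p. is_tree_name p},
                 psol = (\<lambda>p r. r 0 \<le> 1 \<and> (r 0 = 0 \<longrightarrow> body (tree_of p) = {})
                                \<and> (r 0 = 1 \<longrightarrow> (\<lambda>n. r (Suc n)) \<in> body (tree_of p))) \<rparr>"

definition WF_trees :: "baire set" where
  "WF_trees = {p. is_tree_name p \<and> body (tree_of p) = {}}"

text \<open>chi : N^N -> {0,1}, output b named by any r with r 0 = b.\<close>
definition chi_Pi11 :: problem where
  "chi_Pi11 = \<lparr> pdom = UNIV,
                psol = (\<lambda>p r. r 0 = (if p \<in> WF_trees then 1 else 0)) \<rparr>"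

end

theory Submission
  imports Defs "HOL-Library.Sublist"
begin

(* The reduction sends a tree T to an open set P_T of the Ramsey space built so that a
   homogeneous solution in P_T starting with an odd number traces, through the nodes coded by
   its values, an infinite path of T, whereas a solution starting with an even number exists
   only when T is well-founded; conversely the even numbers form a solution in that case, by
   Koenig's lemma for trees bounded by the solution.  So the parity of the first value decides
   well-foundedness and the odd values yield a path.  A name of P_T is computable from T
   because whether a string is listed depends on finitely many nodes of T.

   For strictness, a reduction of FindHS to chi would recover a homogeneous solution from the
   instance and a single bit.  By continuity the first value of the answer is fixed by a finite
   part of the instance, yet every finite part extends to an instance all of whose solutions
   start beyond any given bound; three such extensions force three distinct bits. *)

lemma prod_decode_le: "fst (prod_decode m) \<le> m" "snd (prod_decode m) \<le> m"
  by (metis le_prod_encode_1 prod.collapse prod_decode_inverse)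
     (metis le_prod_encode_2 prod.collapse prod_decode_inverse)

lemma list_decode_Suc [simp]:
  "list_decode (Suc n) = fst (prod_decode n) # list_decode (snd (prod_decode n))"
  by (simp split: prod.split)

declare list_decode.simps(2) [simp del]

lemma list_decode_eq_Nil_iff: "list_decode c = [] \<longleftrightarrow> c = 0"
  by (cases c) auto

lemma length_le_list_encode: "length l \<le> list_encode l"
  by (induction l) (auto intro: le_trans[OF _ le_prod_encode_2])

lemma nth_le_list_encode: "i < length l \<Longrightarrow> l ! i \<le> list_encode l"
proof (induction l arbitrary: i)
  case (Cons a l)
  show ?case
  proof (cases i)
    case 0
    then show ?thesis by (simp add: le_SucI le_prod_encode_1)
  next
    case (Suc j)
    then show ?thesis using Cons le_prod_encode_2[of "list_encode l" a] by fastforce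
  qed
qed simp

lemma list_encode_tl_less: "l \<noteq> [] \<Longrightarrow> list_encode (tl l) < list_encode l"
  by (cases l) (auto simp: le_imp_less_Suc le_prod_encode_2)

lemma strict_mono_triangle: "strict_mono triangle"
  by (simp add: strict_mono_Suc_iff)

lemma prod_encode_mono: "a \<le> a' \<Longrightarrow> b \<le> b' \<Longrightarrow> prod_encode (a, b) \<le> prod_encode (a', b')"
  using strict_mono_less_eq[OF strict_mono_triangle, of "a + b" "a' + b'"]
  by (simp add: prod_encode_def)

lemma prod_encode_less_snd: "b < b' \<Longrightarrow> prod_encode (a, b) < prod_encode (a, b')"
  using strict_monoD[OF strict_mono_triangle, of "a + b" "a + b'"] by (simp add: prod_encode_def)

lemma list_encode_snoc_less: "list_encode l < list_encode (l @ [a])"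
  by (induction l) (auto intro: prod_encode_less_snd)

lemma list_encode_mono: "list_all2 (\<le>) l l' \<Longrightarrow> list_encode l \<le> list_encode l'"
  by (induction rule: list_all2_induct) (auto intro: prod_encode_mono)

section \<open>Functions computable by mu-recursive programs\<close>

definition rec_computable :: "nat \<Rightarrow> (nat list \<Rightarrow> nat) \<Rightarrow> bool" where
  "rec_computable k f \<longleftrightarrow> (\<exists>c. \<forall>xs. length xs = k \<longrightarrow> reval c xs (f xs))"

lemma rec_computable_cong:
  "rec_computable k f \<Longrightarrow> (\<And>xs. length xs = k \<Longrightarrow> f xs = g xs) \<Longrightarrow> rec_computable k g"
  unfolding rec_computable_def by metis

lemma rec_computable_zero: "rec_computable k (\<lambda>_. 0)"
  unfolding rec_computable_def by (auto intro: reval.rz)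

lemma rec_computable_proj: "i < k \<Longrightarrow> rec_computable k (\<lambda>xs. xs ! i)"
  unfolding rec_computable_def by (auto intro: reval.rproj)

lemma rec_computable_comp:
  assumes f: "rec_computable (length gs) f" and gs: "\<forall>g\<in>set gs. rec_computable k g"
  shows "rec_computable k (\<lambda>xs. f (map (\<lambda>g. g xs) gs))"
proof -
  from gs have "\<exists>cs. \<forall>xs. length xs = k \<longrightarrow> list_all2 (\<lambda>c y. reval c xs y) cs (map (\<lambda>g. g xs) gs)"
  proof (induction gs)
    case (Cons g gs)
    then obtain cs where "\<forall>xs. length xs = k \<longrightarrow> list_all2 (\<lambda>c y. reval c xs y) cs (map (\<lambda>g. g xs) gs)"
      by auto
    moreover obtain c where "\<forall>xs. length xs = k \<longrightarrow> reval c xs (g xs)"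
      using Cons.prems unfolding rec_computable_def by auto
    ultimately show ?case by (intro exI[of _ "c # cs"]) auto
  qed simp
  then obtain cs where cs: "\<forall>xs. length xs = k \<longrightarrow> list_all2 (\<lambda>c y. reval c xs y) cs (map (\<lambda>g. g xs) gs)"
    by blast
  obtain c where c: "\<forall>ys. length ys = length gs \<longrightarrow> reval c ys (f ys)"
    using f unfolding rec_computable_def by blast
  show ?thesis unfolding rec_computable_def
    by (rule exI[of _ "RComp c cs"]) (auto intro!: reval.rcomp cs[rule_format] c[rule_format])
qed

lemma rec_computable_comp1:
  "rec_computable 1 f \<Longrightarrow> rec_computable k a \<Longrightarrow> rec_computable k (\<lambda>xs. f [a xs])"
  using rec_computable_comp[of "[a]" f k] by simp

lemma rec_computable_comp2:
  "rec_computable 2 f \<Longrightarrow> rec_computable k a \<Longrightarrow> rec_computable k b \<Longrightarrow>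
   rec_computable k (\<lambda>xs. f [a xs, b xs])"
  using rec_computable_comp[of "[a, b]" f k] by (simp add: numeral_2_eq_2)

lemma rec_computable_Suc:
  assumes "rec_computable k f"
  shows "rec_computable k (\<lambda>xs. Suc (f xs))"
proof -
  obtain c where "\<forall>xs. length xs = k \<longrightarrow> reval c xs (f xs)"
    using assms unfolding rec_computable_def by blast
  then have "\<forall>xs. length xs = k \<longrightarrow> reval (RComp RSuc [c]) xs (Suc (f xs))"
    by (auto intro!: reval.rcomp reval.rsuc)
  then show ?thesis unfolding rec_computable_def by blast
qed

lemma rec_computable_const: "rec_computable k (\<lambda>_. n)"
  by (induction n) (auto intro: rec_computable_zero rec_computable_Suc[of k "\<lambda>_. _"])

lemma rec_computable_select:
  assumes "rec_computable (length is) f" "\<forall>i\<in>set is. i < k"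
  shows "rec_computable k (\<lambda>xs. f (map (\<lambda>i. xs ! i) is))"
  using rec_computable_comp[of "map (\<lambda>i xs. xs ! i) is" f k] assms
  by (auto simp: comp_def intro: rec_computable_proj)

lemma rec_computable_let:
  assumes "rec_computable (Suc k) f" "rec_computable k b"
  shows "rec_computable k (\<lambda>xs. f (b xs # xs))"
proof -
  have "rec_computable k (\<lambda>xs. f (map (\<lambda>g. g xs) (b # map (\<lambda>i xs. xs ! i) [0..<k])))"
    using assms by (intro rec_computable_comp) (auto intro: rec_computable_proj)
  then show ?thesis by (rule rec_computable_cong) (simp add: comp_def, metis map_nth)
qed

fun prim_rec :: "(nat list \<Rightarrow> nat) \<Rightarrow> (nat list \<Rightarrow> nat) \<Rightarrow> nat \<Rightarrow> nat list \<Rightarrow> nat" where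
  "prim_rec f g 0 xs = f xs"
| "prim_rec f g (Suc n) xs = g (prim_rec f g n xs # n # xs)"

lemma rec_computable_prim_rec:
  assumes "rec_computable k f" "rec_computable (Suc (Suc k)) g"
  shows "rec_computable (Suc k) (\<lambda>xs. prim_rec f g (hd xs) (tl xs))"
proof -
  obtain cf where cf: "\<forall>xs. length xs = k \<longrightarrow> reval cf xs (f xs)"
    using assms(1) unfolding rec_computable_def by blast
  obtain cg where cg: "\<forall>xs. length xs = Suc (Suc k) \<longrightarrow> reval cg xs (g xs)"
    using assms(2) unfolding rec_computable_def by blast
  have "reval (RPrim cf cg) (n # xs) (prim_rec f g n xs)" if "length xs = k" for n xs
  proof (induction n)
    case 0
    then show ?case using cf that by (auto intro: reval.rprim0)
  next
    case (Suc n)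
    then show ?case using cg that by (auto intro: reval.rprimS)
  qed
  then show ?thesis unfolding rec_computable_def
    by (intro exI[of _ "RPrim cf cg"]) (metis length_Suc_conv list.sel(1,3))
qed

lemma rec_computable_add:
  assumes "rec_computable k a" "rec_computable k b"
  shows "rec_computable k (\<lambda>xs. a xs + b xs)"
proof -
  have "rec_computable 2 (\<lambda>xs. prim_rec (\<lambda>ys. ys ! 0) (\<lambda>ys. Suc (ys ! 0)) (hd xs) (tl xs))"
    using rec_computable_prim_rec[of 1 "\<lambda>ys. ys ! 0" "\<lambda>ys. Suc (ys ! 0)"]
      rec_computable_proj[of 0] rec_computable_Suc[OF rec_computable_proj[of 0]]
    by (simp add: numeral_2_eq_2)
  moreover have "prim_rec (\<lambda>ys. ys ! 0) (\<lambda>ys. Suc (ys ! 0)) n ys = n + ys ! 0" for n ys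
    by (induction n) auto
  ultimately have "rec_computable 2 (\<lambda>xs. xs ! 0 + xs ! 1)"
    by (elim rec_computable_cong) (auto simp: numeral_2_eq_2 length_Suc_conv)
  from rec_computable_comp2[OF this assms] show ?thesis by simp
qed

lemma rec_computable_pred:
  assumes "rec_computable k a"
  shows "rec_computable k (\<lambda>xs. a xs - 1)"
proof -
  have "rec_computable 1 (\<lambda>xs. prim_rec (\<lambda>ys. 0) (\<lambda>ys. ys ! 1) (hd xs) (tl xs))"
    using rec_computable_prim_rec[of 0 "\<lambda>ys. 0" "\<lambda>ys. ys ! 1"]
      rec_computable_zero rec_computable_proj[of 1 2]
    by (simp add: numeral_2_eq_2)
  moreover have "prim_rec (\<lambda>ys. 0) (\<lambda>ys. ys ! 1) n ys = n - 1" for n ys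
    by (cases n) auto
  ultimately have "rec_computable 1 (\<lambda>xs. xs ! 0 - 1)"
    by (elim rec_computable_cong) (auto simp: length_Suc_conv)
  from rec_computable_comp1[OF this assms] show ?thesis by simp
qed

lemma rec_computable_diff:
  assumes "rec_computable k a" "rec_computable k b"
  shows "rec_computable k (\<lambda>xs. a xs - b xs)"
proof -
  have "rec_computable 2 (\<lambda>xs. prim_rec (\<lambda>ys. ys ! 0) (\<lambda>ys. ys ! 0 - 1) (hd xs) (tl xs))"
    using rec_computable_prim_rec[of 1 "\<lambda>ys. ys ! 0" "\<lambda>ys. ys ! 0 - 1"]
      rec_computable_proj[of 0] rec_computable_pred[OF rec_computable_proj[of 0]]
    by (simp add: numeral_2_eq_2)
  moreover have "prim_rec (\<lambda>ys. ys ! 0) (\<lambda>ys. ys ! 0 - 1) n ys = ys ! 0 - n" for n ys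
    by (induction n) auto
  ultimately have "rec_computable 2 (\<lambda>xs. xs ! 1 - xs ! 0)"
    by (elim rec_computable_cong) (auto simp: numeral_2_eq_2 length_Suc_conv)
  from rec_computable_comp2[OF this assms(2,1)] show ?thesis by simp
qed

lemma rec_computable_mult:
  assumes "rec_computable k a" "rec_computable k b"
  shows "rec_computable k (\<lambda>xs. a xs * b xs)"
proof -
  have "rec_computable 2 (\<lambda>xs. prim_rec (\<lambda>ys. 0) (\<lambda>ys. ys ! 0 + ys ! 2) (hd xs) (tl xs))"
    using rec_computable_prim_rec[of 1 "\<lambda>ys. 0" "\<lambda>ys. ys ! 0 + ys ! 2"] rec_computable_zero
      rec_computable_add[OF rec_computable_proj[of 0] rec_computable_proj[of 2]]
    by (simp add: numeral_2_eq_2 numeral_3_eq_3)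
  moreover have "prim_rec (\<lambda>ys. 0) (\<lambda>ys. ys ! 0 + ys ! 2) n ys = n * ys ! 0" for n ys
    by (induction n) auto
  ultimately have "rec_computable 2 (\<lambda>xs. xs ! 0 * xs ! 1)"
    by (elim rec_computable_cong) (auto simp: numeral_2_eq_2 length_Suc_conv)
  from rec_computable_comp2[OF this assms] show ?thesis by simp
qed

lemma rec_computable_if:
  assumes c: "rec_computable k c" and a: "rec_computable k a" and b: "rec_computable k b"
  shows "rec_computable k (\<lambda>xs. if c xs \<noteq> 0 then a xs else b xs)"
proof -
  have "rec_computable k (\<lambda>xs. a xs * (1 - (1 - c xs)) + b xs * (1 - c xs))"
    by (intro rec_computable_add rec_computable_mult rec_computable_diff a b c rec_computable_const)
  then show ?thesis by (rule rec_computable_cong) auto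
qed

lemma rec_computable_if_less:
  assumes "rec_computable k a" "rec_computable k b" "rec_computable k c" "rec_computable k d"
  shows "rec_computable k (\<lambda>xs. if a xs < b xs then c xs else d xs)"
proof -
  have "rec_computable k (\<lambda>xs. if b xs - a xs \<noteq> 0 then c xs else d xs)"
    using assms by (intro rec_computable_if rec_computable_diff)
  then show ?thesis by (rule rec_computable_cong) auto
qed

definition bounded_mu :: "nat \<Rightarrow> (nat \<Rightarrow> bool) \<Rightarrow> nat" where
  "bounded_mu n Q = (if \<exists>c<n. Q c then (LEAST c. Q c) else n)"

lemma bounded_mu_0 [simp]: "bounded_mu 0 Q = 0"
  by (simp add: bounded_mu_def)

lemma bounded_mu_witness:
  assumes "\<exists>c<n. Q c"
  shows "bounded_mu n Q = (LEAST c. Q c)" "(LEAST c. Q c) < n" "Q (LEAST c. Q c)"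
proof -
  obtain c where "c < n" "Q c" using assms by blast
  then show "bounded_mu n Q = (LEAST c. Q c)" "(LEAST c. Q c) < n" "Q (LEAST c. Q c)"
    using assms Least_le[of Q c] LeastI[of Q c] by (simp_all add: bounded_mu_def)
qed

lemma bounded_mu_no_witness: "\<not> (\<exists>c<n. Q c) \<Longrightarrow> bounded_mu n Q = n"
  unfolding bounded_mu_def by auto

lemma bounded_mu_less_iff: "bounded_mu n Q < n \<longleftrightarrow> (\<exists>c<n. Q c)"
  by (metis bounded_mu_witness(1,2) bounded_mu_no_witness less_irrefl)

lemma bounded_mu_holds: "bounded_mu n Q < n \<Longrightarrow> Q (bounded_mu n Q)"
  by (metis bounded_mu_witness(1,3) bounded_mu_less_iff)

lemma bounded_mu_minimal: "c < bounded_mu n Q \<Longrightarrow> \<not> Q c"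
  by (metis bounded_mu_witness(1) bounded_mu_no_witness not_less_Least)

lemma bounded_mu_eqI: "c < n \<Longrightarrow> Q c \<Longrightarrow> (\<And>d. Q d \<Longrightarrow> d = c) \<Longrightarrow> bounded_mu n Q = c"
  by (metis bounded_mu_less_iff bounded_mu_holds)

lemma bounded_mu_Suc:
  "bounded_mu (Suc n) Q = (if bounded_mu n Q < n then bounded_mu n Q else if Q n then n else Suc n)"
proof (cases "\<exists>c<n. Q c")
  case True
  then have "\<exists>c<Suc n. Q c" using less_SucI by blast
  then show ?thesis using bounded_mu_witness[OF True] bounded_mu_witness[of "Suc n" Q] by simp
next
  case False
  then have "(\<exists>c<Suc n. Q c) \<longleftrightarrow> Q n" using less_Suc_eq by auto
  moreover have "Q n \<Longrightarrow> (LEAST c. Q c) = n"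
    using False by (metis Least_equality not_less)
  ultimately show ?thesis
    using False bounded_mu_no_witness bounded_mu_witness(1)[of "Suc n" Q] by auto
qed

lemma rec_computable_bounded_mu:
  assumes p: "rec_computable (Suc k) p" and b: "rec_computable k b"
  shows "rec_computable k (\<lambda>xs. bounded_mu (b xs) (\<lambda>c. p (c # xs) \<noteq> 0))"
proof -
  define step where "step = (\<lambda>ys::nat list. if ys ! 0 < ys ! 1 then ys ! 0 else
                  if p (map (\<lambda>i. ys ! i) [1..<Suc (Suc k)]) \<noteq> 0 then ys ! 1 else Suc (ys ! 1))"
  have p': "rec_computable (Suc (Suc k)) (\<lambda>ys. p (map (\<lambda>i. ys ! i) [1..<Suc (Suc k)]))"
    using rec_computable_select[of "[1..<Suc (Suc k)]" p "Suc (Suc k)"] p by (simp del: upt_Suc)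
  have "rec_computable (Suc (Suc k)) step" unfolding step_def
    by (intro rec_computable_if_less rec_computable_if rec_computable_Suc rec_computable_proj p')
       simp_all
  then have iter: "rec_computable (Suc k) (\<lambda>ys. prim_rec (\<lambda>_. 0) step (hd ys) (tl ys))"
    by (rule rec_computable_prim_rec[OF rec_computable_zero])
  have mu: "prim_rec (\<lambda>_. 0) step n xs = bounded_mu n (\<lambda>c. p (c # xs) \<noteq> 0)" if "length xs = k" for n xs
  proof (induction n)
    case (Suc n)
    have "map ((!) (a # n # xs)) [Suc 0..<Suc (Suc k)] = map ((!) (n # xs)) [0..<length (n # xs)]" for a
      using that by (simp add: map_Suc_upt[symmetric] del: upt_Suc)
    then have "map ((!) (a # n # xs)) [Suc 0..<Suc (Suc k)] = n # xs" for a
      by (metis map_nth)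
    then show ?case using Suc by (simp add: step_def bounded_mu_Suc del: upt_Suc)
  qed simp
  show ?thesis using rec_computable_let[OF iter b] by (rule rec_computable_cong) (simp add: mu)
qed

section \<open>An expression language for computable functions\<close>

text \<open>Variables are de Bruijn indices into the argument list: \<open>Mu b p\<close> and \<open>Let e p\<close>
  bind index 0 in \<open>p\<close>, and \<open>Rec n e0 e1\<close> binds the accumulator and the counter
  (indices 0 and 1) in \<open>e1\<close>.\<close>

datatype nexp = V nat | K nat | Add nexp nexp | Sub nexp nexp | Mul nexp nexp | Lt nexp nexp
  | If nexp nexp nexp | Mu nexp nexp | Rec nexp nexp nexp | Let nexp nexp

primrec eval :: "nexp \<Rightarrow> nat list \<Rightarrow> nat" where
  "eval (V i) xs = xs ! i"
| "eval (K n) xs = n"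
| "eval (Add a b) xs = eval a xs + eval b xs"
| "eval (Sub a b) xs = eval a xs - eval b xs"
| "eval (Mul a b) xs = eval a xs * eval b xs"
| "eval (Lt a b) xs = (if eval a xs < eval b xs then 1 else 0)"
| "eval (If c a b) xs = (if eval c xs \<noteq> 0 then eval a xs else eval b xs)"
| "eval (Mu b p) xs = bounded_mu (eval b xs) (\<lambda>c. eval p (c # xs) \<noteq> 0)"
| "eval (Rec n e0 e1) xs = prim_rec (eval e0) (eval e1) (eval n xs) xs"
| "eval (Let e p) xs = eval p (eval e xs # xs)"

primrec wf_nexp :: "nexp \<Rightarrow> nat \<Rightarrow> bool" where
  "wf_nexp (V i) k = (i < k)"
| "wf_nexp (K n) k = True"
| "wf_nexp (Add a b) k = (wf_nexp a k \<and> wf_nexp b k)"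
| "wf_nexp (Sub a b) k = (wf_nexp a k \<and> wf_nexp b k)"
| "wf_nexp (Mul a b) k = (wf_nexp a k \<and> wf_nexp b k)"
| "wf_nexp (Lt a b) k = (wf_nexp a k \<and> wf_nexp b k)"
| "wf_nexp (If c a b) k = (wf_nexp c k \<and> wf_nexp a k \<and> wf_nexp b k)"
| "wf_nexp (Mu b p) k = (wf_nexp b k \<and> wf_nexp p (Suc k))"
| "wf_nexp (Rec n e0 e1) k = (wf_nexp n k \<and> wf_nexp e0 k \<and> wf_nexp e1 (Suc (Suc k)))"
| "wf_nexp (Let e p) k = (wf_nexp e k \<and> wf_nexp p (Suc k))"

lemma wf_nexp_mono: "wf_nexp e k \<Longrightarrow> k \<le> k' \<Longrightarrow> wf_nexp e k'"
  by (induction e arbitrary: k k') auto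

lemma rec_computable_eval: "wf_nexp e k \<Longrightarrow> rec_computable k (eval e)"
proof (induction e arbitrary: k)
  case (V i)
  then show ?case by (simp add: rec_computable_proj)
next
  case (K n)
  then show ?case by (simp add: rec_computable_const)
next
  case (Add a b)
  then show ?case by (simp add: rec_computable_add)
next
  case (Sub a b)
  then show ?case by (simp add: rec_computable_diff)
next
  case (Mul a b)
  then show ?case by (simp add: rec_computable_mult)
next
  case (Lt a b)
  then show ?case by (simp add: rec_computable_if_less rec_computable_const)
next
  case (If c a b)
  then show ?case using rec_computable_if[of k "eval c" "eval a" "eval b"] by simp
next
  case (Mu b p)
  then show ?case using rec_computable_bounded_mu[of k "eval p" "eval b"] by simp
next
  case (Rec n e0 e1)
  then have "rec_computable (Suc k) (\<lambda>ys. prim_rec (eval e0) (eval e1) (hd ys) (tl ys))"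
    by (simp add: rec_computable_prim_rec)
  from rec_computable_let[OF this] Rec show ?case by simp
next
  case (Let e p)
  then show ?case using rec_computable_let[of k "eval p" "eval e"] by simp
qed

lemma computable_nat_eval: "wf_nexp e 1 \<Longrightarrow> computable_nat (\<lambda>n. eval e [n])"
  using rec_computable_eval[of e 1] unfolding rec_computable_def computable_nat_def
  by (metis length_Cons list.size(3) One_nat_def)

definition NotE :: "nexp \<Rightarrow> nexp" where
  "NotE a = If a (K 0) (K 1)"
definition AndE :: "nexp \<Rightarrow> nexp \<Rightarrow> nexp" where
  "AndE a b = If a (If b (K 1) (K 0)) (K 0)"
definition OrE :: "nexp \<Rightarrow> nexp \<Rightarrow> nexp" where
  "OrE a b = If a (K 1) (If b (K 1) (K 0))"
definition EqE :: "nexp \<Rightarrow> nexp \<Rightarrow> nexp" where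
  "EqE a b = NotE (Add (Sub a b) (Sub b a))"
definition LeE :: "nexp \<Rightarrow> nexp \<Rightarrow> nexp" where
  "LeE a b = NotE (Lt b a)"
definition ExE :: "nexp \<Rightarrow> nexp \<Rightarrow> nexp" where
  "ExE b p = Lt (Mu b p) b"
definition AllE :: "nexp \<Rightarrow> nexp \<Rightarrow> nexp" where
  "AllE b p = NotE (ExE b (NotE p))"

lemma eval_NotE [simp]: "eval (NotE a) xs = (if eval a xs = 0 then 1 else 0)"
  by (simp add: NotE_def)
lemma eval_AndE [simp]: "eval (AndE a b) xs = (if eval a xs \<noteq> 0 \<and> eval b xs \<noteq> 0 then 1 else 0)"
  by (simp add: AndE_def)
lemma eval_OrE [simp]: "eval (OrE a b) xs = (if eval a xs \<noteq> 0 \<or> eval b xs \<noteq> 0 then 1 else 0)"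
  by (simp add: OrE_def)
lemma eval_EqE [simp]: "eval (EqE a b) xs = (if eval a xs = eval b xs then 1 else 0)"
  by (simp add: EqE_def)
lemma eval_LeE [simp]: "eval (LeE a b) xs = (if eval a xs \<le> eval b xs then 1 else 0)"
  by (simp add: LeE_def)
lemma eval_ExE [simp]: "eval (ExE b p) xs = (if \<exists>c<eval b xs. eval p (c # xs) \<noteq> 0 then 1 else 0)"
  by (simp add: ExE_def bounded_mu_less_iff)
lemma eval_AllE [simp]: "eval (AllE b p) xs = (if \<forall>c<eval b xs. eval p (c # xs) \<noteq> 0 then 1 else 0)"
  by (auto simp add: AllE_def)

lemma wf_nexp_NotE [simp]: "wf_nexp (NotE a) k = wf_nexp a k"
  by (simp add: NotE_def)
lemma wf_nexp_AndE [simp]: "wf_nexp (AndE a b) k = (wf_nexp a k \<and> wf_nexp b k)"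
  by (simp add: AndE_def)
lemma wf_nexp_OrE [simp]: "wf_nexp (OrE a b) k = (wf_nexp a k \<and> wf_nexp b k)"
  by (simp add: OrE_def)
lemma wf_nexp_EqE [simp]: "wf_nexp (EqE a b) k = (wf_nexp a k \<and> wf_nexp b k)"
  by (auto simp add: EqE_def)
lemma wf_nexp_LeE [simp]: "wf_nexp (LeE a b) k = (wf_nexp a k \<and> wf_nexp b k)"
  by (auto simp add: LeE_def)
lemma wf_nexp_ExE [simp]: "wf_nexp (ExE b p) k = (wf_nexp b k \<and> wf_nexp p (Suc k))"
  by (auto simp add: ExE_def)
lemma wf_nexp_AllE [simp]: "wf_nexp (AllE b p) k = (wf_nexp b k \<and> wf_nexp p (Suc k))"
  by (auto simp add: AllE_def)

definition HalfE :: "nexp \<Rightarrow> nexp" where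
  "HalfE a = Let a (Mu (Add (V 0) (K 1))
     (AndE (Lt (V 1) (Mul (K 2) (Add (V 0) (K 1)))) (LeE (Mul (K 2) (V 0)) (V 1))))"

lemma eval_HalfE [simp]: "eval (HalfE a) xs = eval a xs div 2"
  unfolding HalfE_def by (simp, rule bounded_mu_eqI) auto

lemma wf_nexp_HalfE [simp]: "wf_nexp (HalfE a) k = wf_nexp a k"
  by (simp add: HalfE_def)

definition EvenE :: "nexp \<Rightarrow> nexp" where
  "EvenE a = EqE (Sub a (Mul (K 2) (HalfE a))) (K 0)"
definition OddE :: "nexp \<Rightarrow> nexp" where
  "OddE a = NotE (EvenE a)"

lemma eval_EvenE [simp]: "eval (EvenE a) xs = (if even (eval a xs) then 1 else 0)"
  by (simp add: EvenE_def) presburger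
lemma eval_OddE [simp]: "eval (OddE a) xs = (if odd (eval a xs) then 1 else 0)"
  by (simp add: OddE_def)
lemma wf_nexp_EvenE [simp]: "wf_nexp (EvenE a) k = wf_nexp a k"
  by (auto simp: EvenE_def)
lemma wf_nexp_OddE [simp]: "wf_nexp (OddE a) k = wf_nexp a k"
  by (auto simp: OddE_def)

definition PairE :: "nexp \<Rightarrow> nexp \<Rightarrow> nexp" where
  "PairE a b = Add (HalfE (Mul (Add a b) (Add (Add a b) (K 1)))) a"

lemma eval_PairE [simp]: "eval (PairE a b) xs = prod_encode (eval a xs, eval b xs)"
  by (simp add: PairE_def prod_encode_def triangle_def)
lemma wf_nexp_PairE [simp]: "wf_nexp (PairE a b) k = (wf_nexp a k \<and> wf_nexp b k)"
  by (auto simp add: PairE_def)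

text \<open>Both components of a pair code are bounded by the code, so decoding is a bounded search.\<close>

definition FstE :: "nexp \<Rightarrow> nexp" where
  "FstE a = Let a (Mu (Add (V 0) (K 1)) (ExE (Add (V 1) (K 1)) (EqE (PairE (V 1) (V 0)) (V 2))))"
definition SndE :: "nexp \<Rightarrow> nexp" where
  "SndE a = Let a (Mu (Add (V 0) (K 1)) (EqE (PairE (FstE (V 1)) (V 0)) (V 1)))"

lemma eval_FstE [simp]: "eval (FstE a) xs = fst (prod_decode (eval a xs))"
proof -
  let ?m = "eval a xs"
  have "bounded_mu (Suc ?m) (\<lambda>c. \<exists>b<Suc ?m. prod_encode (c, b) = ?m) = fst (prod_decode ?m)"
  proof (rule bounded_mu_eqI)
    show "fst (prod_decode ?m) < Suc ?m" using prod_decode_le by (simp add: le_imp_less_Suc)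
    show "\<exists>b<Suc ?m. prod_encode (fst (prod_decode ?m), b) = ?m"
      using prod_decode_le by (intro exI[of _ "snd (prod_decode ?m)"]) (simp add: le_imp_less_Suc)
    show "d = fst (prod_decode ?m)" if "\<exists>b<Suc ?m. prod_encode (d, b) = ?m" for d
      using that by (metis fst_conv prod_encode_inverse)
  qed
  moreover have "eval (FstE a) xs = bounded_mu (?m + 1)
      (\<lambda>c. eval (ExE (Add (V 1) (K 1)) (EqE (PairE (V 1) (V 0)) (V 2))) (c # ?m # xs) \<noteq> 0)"
    by (simp only: FstE_def eval.simps nth_Cons_0)
  moreover have "(\<lambda>c. eval (ExE (Add (V 1) (K 1)) (EqE (PairE (V 1) (V 0)) (V 2))) (c # ?m # xs) \<noteq> 0)
      = (\<lambda>c. \<exists>b<Suc ?m. prod_encode (c, b) = ?m)"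
    by auto
  ultimately show ?thesis by simp
qed

lemma eval_SndE [simp]: "eval (SndE a) xs = snd (prod_decode (eval a xs))"
proof -
  let ?m = "eval a xs"
  have "bounded_mu (Suc ?m) (\<lambda>c. prod_encode (fst (prod_decode ?m), c) = ?m) = snd (prod_decode ?m)"
  proof (rule bounded_mu_eqI)
    show "snd (prod_decode ?m) < Suc ?m" using prod_decode_le by (simp add: le_imp_less_Suc)
    show "d = snd (prod_decode ?m)" if "prod_encode (fst (prod_decode ?m), d) = ?m" for d
      using that by (metis snd_conv prod_encode_inverse)
  qed simp
  then show ?thesis by (simp add: SndE_def)
qed

lemma wf_nexp_FstE [simp]: "wf_nexp (FstE a) k = wf_nexp a k"
  by (auto simp add: FstE_def)
lemma wf_nexp_SndE [simp]: "wf_nexp (SndE a) k = wf_nexp a k"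
  by (auto simp add: SndE_def)

definition code_tl :: "nat \<Rightarrow> nat" where
  "code_tl c = list_encode (tl (list_decode c))"
definition code_length :: "nat \<Rightarrow> nat" where
  "code_length c = length (list_decode c)"
definition code_nth :: "nat \<Rightarrow> nat \<Rightarrow> nat" where
  "code_nth c i = (if i < code_length c then list_decode c ! i else 0)"

lemma code_tl_eq: "code_tl c = (if c = 0 then 0 else snd (prod_decode (c - 1)))"
  by (cases c) (simp_all add: code_tl_def)

lemma funpow_code_tl: "list_decode ((code_tl ^^ t) c) = drop t (list_decode c)"
  by (induction t) (auto simp: code_tl_def drop_Suc tl_drop)

lemma funpow_code_tl_eq_0_iff: "(code_tl ^^ t) c = 0 \<longleftrightarrow> code_length c \<le> t"
  by (metis funpow_code_tl list_decode_eq_Nil_iff drop_eq_Nil code_length_def)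

lemma code_nth_eq: "i < length (list_decode c) \<Longrightarrow> code_nth c i = list_decode c ! i"
  by (simp add: code_nth_def code_length_def)

definition TlE :: "nexp \<Rightarrow> nexp" where
  "TlE a = Let a (If (V 0) (SndE (Sub (V 0) (K 1))) (K 0))"
definition DropE :: "nexp \<Rightarrow> nexp \<Rightarrow> nexp" where
  "DropE t c = Rec t c (If (V 0) (SndE (Sub (V 0) (K 1))) (K 0))"
definition LenE :: "nexp \<Rightarrow> nexp" where
  "LenE c = Let c (Mu (Add (V 0) (K 1)) (EqE (DropE (V 0) (V 1)) (K 0)))"
definition NthE :: "nexp \<Rightarrow> nexp \<Rightarrow> nexp" where
  "NthE c i = If (Lt i (LenE c)) (FstE (Sub (DropE i c) (K 1))) (K 0)"

lemma eval_TlE [simp]: "eval (TlE a) xs = code_tl (eval a xs)"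
  by (simp add: TlE_def code_tl_eq)

lemma eval_DropE [simp]: "eval (DropE t c) xs = (code_tl ^^ eval t xs) (eval c xs)"
proof -
  have "prim_rec f (\<lambda>ys. code_tl (ys ! 0)) n xs = (code_tl ^^ n) (f xs)" for f n
    by (induction n) auto
  moreover have "eval (If (V 0) (SndE (Sub (V 0) (K 1))) (K 0)) = (\<lambda>ys. code_tl (ys ! 0))"
    by (auto simp: code_tl_eq)
  ultimately show ?thesis by (simp add: DropE_def)
qed

lemma eval_LenE [simp]: "eval (LenE c) xs = code_length (eval c xs)"
proof -
  let ?c = "eval c xs"
  let ?Q = "\<lambda>t. (code_tl ^^ t) ?c = 0"
  have "code_length ?c < Suc ?c"
    using length_le_list_encode[of "list_decode ?c"] by (simp add: code_length_def)
  then have "bounded_mu (Suc ?c) ?Q < Suc ?c"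
    using funpow_code_tl_eq_0_iff bounded_mu_less_iff by blast
  then have "code_length ?c \<le> bounded_mu (Suc ?c) ?Q"
    using bounded_mu_holds funpow_code_tl_eq_0_iff by blast
  moreover have "\<not> code_length ?c < bounded_mu (Suc ?c) ?Q"
    using bounded_mu_minimal funpow_code_tl_eq_0_iff by blast
  ultimately show ?thesis by (simp add: LenE_def)
qed

lemma eval_NthE [simp]: "eval (NthE c i) xs = code_nth (eval c xs) (eval i xs)"
proof -
  let ?c = "eval c xs" and ?i = "eval i xs"
  have "list_decode ?c ! ?i = fst (prod_decode ((code_tl ^^ ?i) ?c - 1))" if "?i < code_length ?c"
  proof -
    have "(code_tl ^^ ?i) ?c \<noteq> 0" using that funpow_code_tl_eq_0_iff by simp
    then obtain n where n: "(code_tl ^^ ?i) ?c = Suc n" using not0_implies_Suc by blast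
    have "list_decode ?c ! ?i = hd (drop ?i (list_decode ?c))"
      using that by (simp add: code_length_def hd_drop_conv_nth)
    also have "\<dots> = hd (list_decode (Suc n))"
      using funpow_code_tl[of ?i ?c] n by simp
    also have "\<dots> = fst (prod_decode n)"
      by simp
    finally show ?thesis using n by simp
  qed
  then show ?thesis by (simp add: NthE_def code_nth_def)
qed

lemma wf_nexp_TlE [simp]: "wf_nexp (TlE a) k = wf_nexp a k"
  by (auto simp: TlE_def)
lemma wf_nexp_DropE [simp]: "wf_nexp (DropE t c) k = (wf_nexp t k \<and> wf_nexp c k)"
  by (auto simp add: DropE_def)
lemma wf_nexp_LenE [simp]: "wf_nexp (LenE c) k = wf_nexp c k"
  by (auto simp add: LenE_def)
lemma wf_nexp_NthE [simp]: "wf_nexp (NthE c i) k = (wf_nexp c k \<and> wf_nexp i k)"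
  by (auto simp add: NthE_def)

section \<open>Homogeneous solutions for the open set of a tree\<close>

abbreviation hom_solutions :: "baire set \<Rightarrow> baire set" where
  "hom_solutions P \<equiv> HS P \<inter> P"

lemma ramsey_comp: "f \<in> ramsey \<Longrightarrow> g \<in> ramsey \<Longrightarrow> f \<circ> g \<in> ramsey"
  unfolding ramsey_def strict_mono_def by auto

lemma id_in_ramsey: "id \<in> ramsey"
  unfolding ramsey_def by (simp add: strict_mono_def)

lemma hom_solutions_comp:
  assumes "f \<in> hom_solutions P" "g \<in> ramsey"
  shows "f \<circ> g \<in> P"
proof -
  have "f \<circ> id \<in> P" using assms(1) by simp
  then show ?thesis
    using assms id_in_ramsey unfolding HS_def homogeneous_def by blast
qed

lemma hom_solutionsI:
  assumes "f \<in> ramsey" "\<And>g. g \<in> ramsey \<Longrightarrow> f \<circ> g \<in> P"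
  shows "f \<in> hom_solutions P"
proof -
  have "f \<in> P" using assms(2)[OF id_in_ramsey] by simp
  then show ?thesis using assms unfolding HS_def homogeneous_def by blast
qed

lemma map_upt_eq_nth: "map h [0..<length s] = s \<Longrightarrow> i < length s \<Longrightarrow> s ! i = h i"
  by (metis diff_zero nth_map_upt add_0)

definition prefix_closed :: "nat list set \<Rightarrow> bool" where
  "prefix_closed M \<longleftrightarrow> (\<forall>s t. s @ t \<in> M \<longrightarrow> s \<in> M)"

lemma prefix_closed_take: "prefix_closed M \<Longrightarrow> s \<in> M \<Longrightarrow> take n s \<in> M"
  unfolding prefix_closed_def by (metis append_take_drop_id)

lemma strict_prefix_iff_nth:
  "strict_prefix xs ys \<longleftrightarrow> length xs < length ys \<and> (\<forall>i<length xs. xs ! i = ys ! i)"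
proof
  assume "strict_prefix xs ys"
  then show "length xs < length ys \<and> (\<forall>i<length xs. xs ! i = ys ! i)"
    by (auto simp: prefix_length_less nth_append elim!: strict_prefixE')
next
  assume *: "length xs < length ys \<and> (\<forall>i<length xs. xs ! i = ys ! i)"
  then have "take (length xs) ys = xs" by (auto intro!: nth_equalityI)
  with * show "strict_prefix xs ys"
    by (metis append_take_drop_id drop_eq_Nil2 not_le strict_prefixI' neq_Nil_conv)
qed

lemma prefix_iff_nth: "prefix xs ys \<longleftrightarrow> length xs \<le> length ys \<and> (\<forall>i<length xs. xs ! i = ys ! i)"
  by (metis prefix_order.order_iff_strict strict_prefix_iff_nth nth_equalityI order_le_less)

text \<open>An odd number \<open>2 c + 1\<close>
  stands for the node coded by \<open>c\<close>.\<close>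

definition node_of :: "nat \<Rightarrow> nat list" where
  "node_of a = list_decode (a div 2)"

lemma node_of_odd [simp]: "node_of (Suc (2 * c)) = list_decode c"
  by (simp add: node_of_def)

definition bounded_by_tail :: "nat list \<Rightarrow> nat list \<Rightarrow> bool" where
  "bounded_by_tail \<sigma> s \<longleftrightarrow> Suc (length \<sigma>) = length s \<and> (\<forall>i<length \<sigma>. \<sigma> ! i \<le> s ! Suc i)"

definition even_listed :: "nat list set \<Rightarrow> nat list \<Rightarrow> bool" where
  "even_listed M s \<longleftrightarrow> s \<noteq> [] \<and> even (s ! 0) \<and> \<not> (\<exists>\<sigma>\<in>M. bounded_by_tail \<sigma> s)"

definition odd_listed :: "nat list set \<Rightarrow> nat list \<Rightarrow> bool" where
  "odd_listed M s \<longleftrightarrow> length s = 2 \<and> odd (s ! 0) \<and> odd (s ! 1) \<and>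
     node_of (s ! 0) \<in> M \<and> node_of (s ! 1) \<in> M \<and> strict_prefix (node_of (s ! 0)) (node_of (s ! 1))"

definition tree_listed :: "nat list set \<Rightarrow> nat list \<Rightarrow> bool" where
  "tree_listed M s \<longleftrightarrow> even_listed M s \<or> odd_listed M s"

definition tree_open :: "nat list set \<Rightarrow> baire set" where
  "tree_open M = (\<Union>s\<in>{s. tree_listed M s}. cone s)"

lemma mem_tree_open:
  "h \<in> tree_open M \<longleftrightarrow> h \<in> ramsey \<and> (\<exists>s. tree_listed M s \<and> map h [0..<length s] = s)"
  unfolding tree_open_def cone_def by auto

lemma path_hom_solution:
  assumes x: "x \<in> body M"
  shows "(\<lambda>i. 2 * list_encode (map x [0..<i]) + 1) \<in> hom_solutions (tree_open M)"
proof -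
  let ?f = "\<lambda>i. 2 * list_encode (map x [0..<i]) + 1"
  have f: "?f \<in> ramsey"
    by (simp add: ramsey_def strict_mono_Suc_iff list_encode_snoc_less)
  show ?thesis
  proof (rule hom_solutionsI[OF f])
    fix g assume g: "g \<in> ramsey"
    then have "g 0 < g 1" by (simp add: ramsey_def strict_mono_def)
    then have "odd_listed M [?f (g 0), ?f (g 1)]"
      using x by (simp add: odd_listed_def body_def strict_prefix_iff_nth)
    moreover have "map (?f \<circ> g) [0..<length [?f (g 0), ?f (g 1)]] = [?f (g 0), ?f (g 1)]"
      by (simp add: numeral_2_eq_2)
    ultimately show "?f \<circ> g \<in> tree_open M"
      using ramsey_comp[OF f g] by (auto simp: mem_tree_open tree_listed_def)
  qed
qed

lemma odd_hom_solution_pair: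
  assumes f: "f \<in> hom_solutions (tree_open M)" and "i < j" and odd: "odd (f i)"
  shows "odd (f j) \<and> node_of (f i) \<in> M \<and> node_of (f j) \<in> M \<and>
    strict_prefix (node_of (f i)) (node_of (f j))"
proof -
  define g where "g n = (if n = 0 then i else j + n - 1)" for n
  have "strict_mono g" unfolding strict_mono_def g_def using \<open>i < j\<close> by auto
  then have "f \<circ> g \<in> tree_open M" using hom_solutions_comp[OF f] by (simp add: ramsey_def)
  then obtain s where s: "tree_listed M s" "map (f \<circ> g) [0..<length s] = s"
    by (auto simp: mem_tree_open)
  have "s ! 0 = f i" if "s \<noteq> []"
    using map_upt_eq_nth[OF s(2), of 0] that by (simp add: g_def)
  then have "odd_listed M s"
    using s(1) odd by (auto simp: tree_listed_def even_listed_def)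
  moreover from this have "s ! 0 = f i" "s ! 1 = f j"
    using map_upt_eq_nth[OF s(2), of 0] map_upt_eq_nth[OF s(2), of 1]
    by (simp_all add: g_def odd_listed_def)
  ultimately show ?thesis by (simp add: odd_listed_def)
qed

lemma odd_hom_solution_path:
  assumes f: "f \<in> hom_solutions (tree_open M)" and odd: "odd (f 0)" and M: "prefix_closed M"
  shows "(\<lambda>n. code_nth (f (Suc n) div 2) n) \<in> body M"
proof -
  let ?s = "\<lambda>i. node_of (f i)"
  have all_odd: "odd (f j)" for j
    using odd_hom_solution_pair[OF f _ odd, of j] odd by (cases j) auto
  then have chain: "i < j \<Longrightarrow> strict_prefix (?s i) (?s j) \<and> ?s j \<in> M" for i j
    using odd_hom_solution_pair[OF f] by blast
  have len: "i \<le> length (?s i)" for i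
  proof (induction i)
    case (Suc i)
    then show ?case using chain[OF lessI, of i] prefix_length_less by fastforce
  qed simp
  have path: "code_nth (f (Suc n) div 2) n = ?s (Suc n) ! n" for n
    using len[of "Suc n"] by (simp add: code_nth_eq node_of_def)
  have "map (\<lambda>n. ?s (Suc n) ! n) [0..<n] = take n (?s n)" for n
  proof (rule nth_equalityI)
    fix m assume "m < length (map (\<lambda>n. ?s (Suc n) ! n) [0..<n])"
    then have "m < n" by simp
    then have "?s (Suc m) ! m = ?s n ! m"
      using chain[of "Suc m" n] len[of "Suc m"]
      by (cases "Suc m = n") (auto simp: strict_prefix_iff_nth)
    then show "map (\<lambda>n. ?s (Suc n) ! n) [0..<n] ! m = take n (?s n) ! m"
      using \<open>m < n\<close> len[of n] by simp
  qed (simp add: len min_absorb2)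
  moreover have "?s n \<in> M" for n
    using odd_hom_solution_pair[OF f lessI all_odd] by blast
  ultimately show ?thesis
    using prefix_closed_take[OF M] by (simp add: body_def path)
qed

lemma even_hom_solution_no_path:
  assumes f: "f \<in> hom_solutions (tree_open M)" and even: "even (f 0)"
  shows "body M = {}"
proof (rule ccontr)
  assume "body M \<noteq> {}"
  then obtain x where x: "x \<in> body M" by blast
  txt \<open>Spread out \<open>f\<close> so much that the path \<open>x\<close> is bounded by the tail of every
    listed initial segment.\<close>
  define g where "g = rec_nat 0 (\<lambda>i gi. gi + 1 + x i)"
  have g0: "g 0 = 0" and gSuc: "g (Suc i) = g i + 1 + x i" for i
    by (simp_all add: g_def)
  have "strict_mono g" by (simp add: strict_mono_Suc_iff gSuc)
  then have "f \<circ> g \<in> tree_open M" using hom_solutions_comp[OF f] by (simp add: ramsey_def)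
  then obtain s where s: "tree_listed M s" "map (f \<circ> g) [0..<length s] = s"
    by (auto simp: mem_tree_open)
  have "s ! 0 = f 0" if "s \<noteq> []" using map_upt_eq_nth[OF s(2), of 0] g0 that by simp
  then have "even_listed M s"
    using s(1) even by (fastforce simp: tree_listed_def odd_listed_def)
  moreover have "bounded_by_tail (map x [0..<length s - 1]) s"
    unfolding bounded_by_tail_def
  proof (intro conjI allI impI)
    show "Suc (length (map x [0..<length s - 1])) = length s"
      using \<open>even_listed M s\<close> by (simp add: even_listed_def)
    have fx: "strict_mono f" using f by (simp add: HS_def homogeneous_def ramsey_def)
    fix i assume "i < length (map x [0..<length s - 1])"
    then have "x i \<le> f (g (Suc i))" "s ! Suc i = f (g (Suc i))"
      using map_upt_eq_nth[OF s(2), of "Suc i"] strict_mono_imp_increasing[OF fx, of "g (Suc i)"]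
      by (simp_all add: gSuc)
    then show "map x [0..<length s - 1] ! i \<le> s ! Suc i"
      using \<open>i < length (map x [0..<length s - 1])\<close> by simp
  qed
  ultimately show False using x by (auto simp: even_listed_def body_def)
qed

section \<open>Koenig's lemma for trees with a bound on the nodes\<close>

definition extendible :: "nat list set \<Rightarrow> (nat \<Rightarrow> nat) \<Rightarrow> nat list \<Rightarrow> bool" where
  "extendible M b \<tau> \<longleftrightarrow> (\<forall>n. \<exists>\<sigma>\<in>M. length \<sigma> = n + length \<tau> \<and> take (length \<tau>) \<sigma> = \<tau> \<and>
     (\<forall>i<length \<sigma>. \<sigma> ! i \<le> b i))"

lemma extendible_snoc:
  assumes M: "prefix_closed M" and \<tau>: "extendible M b \<tau>"
  shows "\<exists>a. extendible M b (\<tau> @ [a])"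
proof (rule ccontr)
  assume "\<nexists>a. extendible M b (\<tau> @ [a])"
  then obtain N where N: "\<And>a. \<not> (\<exists>\<sigma>\<in>M. length \<sigma> = N a + Suc (length \<tau>) \<and>
      take (Suc (length \<tau>)) \<sigma> = \<tau> @ [a] \<and> (\<forall>i<length \<sigma>. \<sigma> ! i \<le> b i))"
    unfolding extendible_def by (metis length_append_singleton)
  txt \<open>Only the finitely many \<open>a \<le> b (length \<tau>)\<close> matter.\<close>
  define L where "L = Max (N ` {..b (length \<tau>)})"
  obtain \<sigma> where \<sigma>: "\<sigma> \<in> M" "length \<sigma> = Suc L + length \<tau>" "take (length \<tau>) \<sigma> = \<tau>"
      "\<forall>i<length \<sigma>. \<sigma> ! i \<le> b i"
    using \<tau> unfolding extendible_def by blast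
  define a where "a = \<sigma> ! length \<tau>"
  have "a \<le> b (length \<tau>)" using \<sigma> unfolding a_def by simp
  then have "N a \<le> L" unfolding L_def by (auto intro: Max_ge)
  moreover have "take (Suc (length \<tau>)) \<sigma> = \<tau> @ [a]"
    using \<sigma>(2,3) by (simp add: a_def take_Suc_conv_app_nth)
  ultimately have "take (N a + Suc (length \<tau>)) \<sigma> \<in> M \<and>
      length (take (N a + Suc (length \<tau>)) \<sigma>) = N a + Suc (length \<tau>) \<and>
      take (Suc (length \<tau>)) (take (N a + Suc (length \<tau>)) \<sigma>) = \<tau> @ [a] \<and>
      (\<forall>i<length (take (N a + Suc (length \<tau>)) \<sigma>). take (N a + Suc (length \<tau>)) \<sigma> ! i \<le> b i)"
    using \<sigma> prefix_closed_take[OF M \<sigma>(1)] by (simp add: min_def)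
  then show False using N[of a] by blast
qed

lemma konig_bounded:
  assumes M: "prefix_closed M" and long: "\<And>n. \<exists>\<sigma>\<in>M. length \<sigma> = n \<and> (\<forall>i<n. \<sigma> ! i \<le> b i)"
  shows "body M \<noteq> {}"
proof -
  have "extendible M b []" unfolding extendible_def using long by (simp, metis)
  then obtain t where t: "\<And>n. extendible M b (t n) \<and> length (t n) = n \<and>
      (\<exists>a. t (Suc n) = t n @ [a])"
    using dependent_nat_choice[of "\<lambda>n \<tau>. extendible M b \<tau> \<and> length \<tau> = n"
        "\<lambda>n \<tau> \<tau>'. \<exists>a. \<tau>' = \<tau> @ [a]"] extendible_snoc[OF M]
    by (metis length_0_conv length_append_singleton)
  have "t n \<in> M" for n
    using t[of n] unfolding extendible_def by (metis add_0 take_all order_refl)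
  moreover have "map (\<lambda>n. t (Suc n) ! n) [0..<n] = t n" for n
  proof (induction n)
    case (Suc n)
    obtain a where "t (Suc n) = t n @ [a]" using t[of n] by blast
    then show ?case using Suc.IH t[of n] by (simp add: nth_append)
  qed (use t[of 0] in simp)
  ultimately have "(\<lambda>n. t (Suc n) ! n) \<in> body M" by (simp add: body_def)
  then show ?thesis by blast
qed

lemma wellfounded_hom_solution:
  assumes M: "prefix_closed M" and wf: "body M = {}"
  shows "(\<lambda>i. 2 * i) \<in> hom_solutions (tree_open M)"
proof (rule hom_solutionsI)
  show "(\<lambda>i. 2 * i) \<in> ramsey" by (simp add: ramsey_def strict_mono_def)
  fix g assume "g \<in> ramsey"
  let ?h = "(\<lambda>i::nat. 2 * i) \<circ> g"
  have h: "?h \<in> ramsey" using \<open>g \<in> ramsey\<close> by (simp add: ramsey_def strict_mono_def)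
  obtain n where n: "\<not> (\<exists>\<sigma>\<in>M. length \<sigma> = n \<and> (\<forall>i<n. \<sigma> ! i \<le> ?h (Suc i)))"
    using konig_bounded[OF M, of "\<lambda>i. ?h (Suc i)"] wf by blast
  have "\<not> bounded_by_tail \<sigma> (map ?h [0..<Suc n])" if "\<sigma> \<in> M" for \<sigma>
  proof
    assume "bounded_by_tail \<sigma> (map ?h [0..<Suc n])"
    then have "length \<sigma> = n \<and> (\<forall>i<n. \<sigma> ! i \<le> ?h (Suc i))"
      by (auto simp: bounded_by_tail_def nth_map_upt simp del: upt_Suc)
    then show False using n that by blast
  qed
  then have "even_listed M (map ?h [0..<Suc n])"
    by (auto simp: even_listed_def simp del: upt_Suc)
  then show "?h \<in> tree_open M"
    using h by (auto simp: mem_tree_open tree_listed_def simp del: upt_Suc)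
qed

lemma hom_solutions_tree_open_nonempty:
  "prefix_closed M \<or> body M \<noteq> {} \<Longrightarrow> hom_solutions (tree_open M) \<noteq> {}"
  using wellfounded_hom_solution path_hom_solution by blast

lemma assoc_valI:
  assumes "\<And>n k. assoc_out \<alpha> p n k = (if k < N n then 0 else Suc (q n))"
  shows "assoc_val \<alpha> p q"
  unfolding assoc_val_def
proof
  fix n
  show "\<exists>k. 0 < assoc_out \<alpha> p n k \<and> (\<forall>j<k. assoc_out \<alpha> p n j = 0) \<and> q n = assoc_out \<alpha> p n k - 1"
    using assms by (intro exI[of _ "N n"]) simp
qed

lemma code_length_prefix_code [simp]: "code_length (prefix_code p k) = k"
  by (simp add: prefix_code_def code_length_def)

lemma code_nth_prefix_code [simp]: "j < k \<Longrightarrow> code_nth (prefix_code p k) j = p j"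
  by (simp add: prefix_code_def code_nth_def code_length_def)

text \<open>Here \<open>w\<close> is the code of a finite part of a name and \<open>c\<close> the code of a node.\<close>

definition decides :: "nexp \<Rightarrow> nat list set \<Rightarrow> nat \<Rightarrow> nat \<Rightarrow> bool" where
  "decides Mb M n w \<longleftrightarrow> (\<forall>c\<le>n. \<forall>rest. (eval Mb (c # w # rest) \<noteq> 0) = (list_decode c \<in> M))"

definition bounded_member_prog :: "nexp \<Rightarrow> nexp" where
  "bounded_member_prog Mb = AndE (EqE (Add (LenE (V 0)) (K 1)) (LenE (V 1)))
     (AndE (AllE (LenE (V 0)) (LeE (NthE (V 1) (V 0)) (NthE (V 2) (Add (V 0) (K 1)))))
       (Let (V 2) (Let (V 1) Mb)))"

definition even_listed_prog :: "nexp \<Rightarrow> nexp" where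
  "even_listed_prog Mb = AndE (Lt (K 0) (LenE (V 0))) (AndE (EvenE (NthE (V 0) (K 0)))
     (NotE (ExE (Add (V 0) (K 1)) (bounded_member_prog Mb))))"

definition odd_listed_prog :: "nexp \<Rightarrow> nexp" where
  "odd_listed_prog Mb = AndE (EqE (LenE (V 0)) (K 2)) (AndE (OddE (NthE (V 0) (K 0)))
     (AndE (OddE (NthE (V 0) (K 1)))
       (Let (HalfE (NthE (V 0) (K 0))) (Let (HalfE (NthE (V 1) (K 1)))
         (AndE (Let (V 3) (Let (V 2) Mb)) (AndE (Let (V 3) (Let (V 1) Mb))
           (AndE (Lt (LenE (V 1)) (LenE (V 0)))
             (AllE (LenE (V 1)) (EqE (NthE (V 2) (V 0)) (NthE (V 1) (V 0)))))))))))"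

definition tree_listed_prog :: "nexp \<Rightarrow> nexp" where
  "tree_listed_prog Mb = OrE (even_listed_prog Mb) (odd_listed_prog Mb)"

lemma wf_nexp_tree_listed_prog: "wf_nexp Mb 2 \<Longrightarrow> wf_nexp (tree_listed_prog Mb) 2"
  by (auto simp: tree_listed_prog_def even_listed_prog_def odd_listed_prog_def
      bounded_member_prog_def elim: wf_nexp_mono)

lemma bounded_by_tail_list_encode_le: "bounded_by_tail \<sigma> s \<Longrightarrow> list_encode \<sigma> \<le> list_encode s"
  using list_encode_mono[of \<sigma> "tl s"] list_encode_tl_less[of s]
  by (fastforce simp: bounded_by_tail_def list_all2_conv_all_nth nth_tl)

lemma eval_bounded_member_prog:
  assumes "\<forall>rest. (eval Mb (c # w # rest) \<noteq> 0) = (list_decode c \<in> M)"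
  shows "(eval (bounded_member_prog Mb) (c # n # w # rest) \<noteq> 0) \<longleftrightarrow>
    bounded_by_tail (list_decode c) (list_decode n) \<and> list_decode c \<in> M"
  using assms
  by (auto simp: bounded_member_prog_def bounded_by_tail_def code_length_def code_nth_eq)

lemma eval_even_listed_prog:
  assumes M: "decides Mb M n w"
  shows "(eval (even_listed_prog Mb) (n # w # rest) \<noteq> 0) \<longleftrightarrow> even_listed M (list_decode n)"
proof -
  have "(\<exists>c<n + 1. eval (bounded_member_prog Mb) (c # n # w # rest) \<noteq> 0) \<longleftrightarrow>
      (\<exists>\<sigma>\<in>M. bounded_by_tail \<sigma> (list_decode n))"
    using M eval_bounded_member_prog[of Mb _ w M n rest]
      bounded_by_tail_list_encode_le[of _ "list_decode n"]
    unfolding decides_def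
    by (metis Suc_eq_plus1 less_Suc_eq_le list_decode_inverse list_encode_inverse)
  moreover have "list_decode n \<noteq> [] \<Longrightarrow> code_nth n 0 = list_decode n ! 0"
    by (simp add: code_nth_eq)
  ultimately show ?thesis
    by (auto simp: even_listed_prog_def even_listed_def code_length_def)
qed

lemma eval_odd_listed_prog:
  assumes M: "decides Mb M n w"
  shows "(eval (odd_listed_prog Mb) (n # w # rest) \<noteq> 0) \<longleftrightarrow> odd_listed M (list_decode n)"
proof (cases "length (list_decode n) = 2")
  case True
  let ?s = "list_decode n"
  let ?a = "?s ! 0 div 2" and ?b = "?s ! 1 div 2"
  have nth: "code_nth n 0 = ?s ! 0" "code_nth n 1 = ?s ! 1"
    using True by (simp_all add: code_nth_eq)
  have "?a \<le> n" "?b \<le> n"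
    using nth_le_list_encode[of 0 ?s] nth_le_list_encode[of 1 ?s] True by simp_all
  then have "(eval Mb (?a # w # rest') \<noteq> 0) = (node_of (?s ! 0) \<in> M)"
      "(eval Mb (?b # w # rest') \<noteq> 0) = (node_of (?s ! 1) \<in> M)" for rest'
    using M by (simp_all add: decides_def node_of_def)
  moreover have "(code_length ?a < code_length ?b \<and> (\<forall>i<code_length ?a. code_nth ?a i = code_nth ?b i))
      \<longleftrightarrow> strict_prefix (node_of (?s ! 0)) (node_of (?s ! 1))"
    by (auto simp: strict_prefix_iff_nth node_of_def code_length_def code_nth_eq)
  ultimately show ?thesis
    using True nth
    by (simp add: odd_listed_prog_def odd_listed_def code_length_def del: One_nat_def) blast
qed (simp add: odd_listed_prog_def odd_listed_def code_length_def)

lemma eval_tree_listed_prog: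
  "decides Mb M n w \<Longrightarrow>
    (eval (tree_listed_prog Mb) (n # w # rest) \<noteq> 0) \<longleftrightarrow> tree_listed M (list_decode n)"
  using eval_even_listed_prog eval_odd_listed_prog
  by (simp add: tree_listed_prog_def tree_listed_def)

text \<open>On input \<open>\<langle>n, w\<rangle>\<close>, with \<open>w\<close> the code of a finite part of the name, \<open>name_prog Mb\<close>
  waits until \<open>w\<close> is longer than \<open>n\<close> and then outputs \<open>1 + tree_open_name M n\<close>.\<close>

definition name_prog :: "nexp \<Rightarrow> nexp" where
  "name_prog Mb = Let (FstE (V 0)) (Let (SndE (V 1)) (If (LeE (LenE (V 0)) (V 1)) (K 0)
     (If (Let (V 0) (Let (V 2) (tree_listed_prog Mb))) (Add (V 1) (K 2)) (K 1))))"

definition tree_open_name :: "nat list set \<Rightarrow> baire" where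
  "tree_open_name M n = (if tree_listed M (list_decode n) then Suc n else 0)"

lemma open_named_tree_open_name: "open_named (tree_open_name M) = tree_open M"
proof -
  have "listed_strings (tree_open_name M) = {s. tree_listed M s}"
    unfolding listed_strings_def tree_open_name_def by (auto split: if_splits)
  then show ?thesis by (simp add: open_named_def tree_open_def)
qed

lemma wf_nexp_name_prog: "wf_nexp Mb 2 \<Longrightarrow> wf_nexp (name_prog Mb) 1"
  using wf_nexp_tree_listed_prog[of Mb] by (auto simp: name_prog_def elim: wf_nexp_mono)

lemma assoc_val_name_prog:
  assumes "\<And>n k. n < k \<Longrightarrow> decides Mb M n (prefix_code p k)"
  shows "assoc_val (\<lambda>x. eval (name_prog Mb) [x]) p (tree_open_name M)"
proof (rule assoc_valI[where N = Suc])
  fix n k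
  have "n < k \<Longrightarrow> (eval (tree_listed_prog Mb) (n # prefix_code p k # prefix_code p k # n #
      [prod_encode (n, prefix_code p k)]) \<noteq> 0) \<longleftrightarrow> tree_listed M (list_decode n)"
    using assms by (rule eval_tree_listed_prog)
  then show "assoc_out (\<lambda>x. eval (name_prog Mb) [x]) p n k =
      (if k < Suc n then 0 else Suc (tree_open_name M n))"
    by (simp add: assoc_out_def name_prog_def tree_open_name_def)
qed

lemma weihrauch_le_FindHS_via_tree_open:
  fixes M :: "baire \<Rightarrow> nat list set" and out :: "baire \<Rightarrow> baire"
  assumes "wf_nexp Mb 2" and "wf_nexp Out 1"
    and decides: "\<And>p n k. p \<in> pdom F \<Longrightarrow> n < k \<Longrightarrow> decides Mb (M p) n (prefix_code p k)"
    and solvable: "\<And>p. p \<in> pdom F \<Longrightarrow> prefix_closed (M p) \<or> body (M p) \<noteq> {}"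
    and out: "\<And>p f. assoc_val (\<lambda>x. eval Out [x]) (bpair p f) (out f)"
    and correct: "\<And>p f. p \<in> pdom F \<Longrightarrow> f \<in> hom_solutions (tree_open (M p)) \<Longrightarrow> psol F p (out f)"
  shows "F \<le>\<^sub>W FindHS_Sigma01"
  unfolding weihrauch_le_def
proof (rule exI[of _ "\<lambda>x. eval (name_prog Mb) [x]"], rule exI[of _ "\<lambda>x. eval Out [x]"],
    intro conjI allI impI ballI)
  show "computable_nat (\<lambda>x. eval (name_prog Mb) [x])"
    using assms(1) by (intro computable_nat_eval wf_nexp_name_prog)
  show "computable_nat (\<lambda>x. eval Out [x])"
    using assms(2) by (rule computable_nat_eval)
  fix G p assume G: "realizes G FindHS_Sigma01" and p: "p \<in> pdom F"
  have q: "tree_open_name (M p) \<in> pdom FindHS_Sigma01"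
    using hom_solutions_tree_open_nonempty[OF solvable[OF p]]
    by (simp add: FindHS_Sigma01_def open_named_tree_open_name)
  then have "psol FindHS_Sigma01 (tree_open_name (M p)) (G (tree_open_name (M p)))"
    using G by (simp add: realizes_def)
  then have "G (tree_open_name (M p)) \<in> hom_solutions (tree_open (M p))"
    by (simp add: FindHS_Sigma01_def open_named_tree_open_name)
  then show "\<exists>q. assoc_val (\<lambda>x. eval (name_prog Mb) [x]) p q \<and> q \<in> pdom FindHS_Sigma01 \<and>
      (\<exists>r. assoc_val (\<lambda>x. eval Out [x]) (bpair p (G q)) r \<and> psol F p r)"
    using assoc_val_name_prog[OF decides[OF p]] q out correct[OF p] by blast
qed

definition tree_prog :: nexp where
  "tree_prog = EqE (NthE (V 1) (V 0)) (K 1)"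

lemma decides_tree_prog: "n < k \<Longrightarrow> decides tree_prog (tree_of p) n (prefix_code p k)"
  by (simp add: decides_def tree_prog_def tree_of_def)

lemma prefix_closed_tree_of: "is_tree_name p \<Longrightarrow> prefix_closed (tree_of p)"
  unfolding is_tree_name_def prefix_closed_def by blast

definition sTC_out :: "baire \<Rightarrow> baire" where
  "sTC_out f n = (if n = 0 then (if odd (f 0) then 1 else 0)
     else if odd (f 0) then code_nth (f n div 2) (n - 1) else 0)"

definition sTC_out_prog :: nexp where
  "sTC_out_prog = Let (FstE (V 0)) (Let (SndE (V 1))
     (If (Lt (LenE (V 0)) (Add (Mul (K 2) (V 1)) (K 2))) (K 0)
       (Add (K 1) (If (EqE (V 1) (K 0)) (OddE (NthE (V 0) (K 1)))
         (If (OddE (NthE (V 0) (K 1)))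
           (NthE (HalfE (NthE (V 0) (Add (Mul (K 2) (V 1)) (K 1)))) (Sub (V 1) (K 1))) (K 0))))))"

lemma assoc_val_sTC_out_prog: "assoc_val (\<lambda>x. eval sTC_out_prog [x]) (bpair p f) (sTC_out f)"
proof (rule assoc_valI[where N = "\<lambda>n. 2 * n + 2"])
  fix n k
  have "2 * n + 2 \<le> k \<Longrightarrow> code_nth (prefix_code (bpair p f) k) 1 = f 0"
    "2 * n + 2 \<le> k \<Longrightarrow> code_nth (prefix_code (bpair p f) k) (2 * n + 1) = f n"
    by (simp_all add: bpair_def)
  then show "assoc_out (\<lambda>x. eval sTC_out_prog [x]) (bpair p f) n k =
      (if k < 2 * n + 2 then 0 else Suc (sTC_out f n))"
    by (simp add: assoc_out_def sTC_out_prog_def sTC_out_def)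
qed

theorem sTC_Baire_le_FindHS: "sTC_Baire \<le>\<^sub>W FindHS_Sigma01"
proof (rule weihrauch_le_FindHS_via_tree_open[where M = tree_of and Mb = tree_prog
      and Out = sTC_out_prog and out = sTC_out])
  show "wf_nexp tree_prog 2" "wf_nexp sTC_out_prog 1"
    by (simp_all add: tree_prog_def sTC_out_prog_def)
  show "decides tree_prog (tree_of p) n (prefix_code p k)" if "n < k" for p n k
    using that by (rule decides_tree_prog)
  show "assoc_val (\<lambda>x. eval sTC_out_prog [x]) (bpair p f) (sTC_out f)" for p f
    by (rule assoc_val_sTC_out_prog)
  fix p assume p: "p \<in> pdom sTC_Baire"
  then have M: "prefix_closed (tree_of p)" by (simp add: sTC_Baire_def prefix_closed_tree_of)
  then show "prefix_closed (tree_of p) \<or> body (tree_of p) \<noteq> {}" ..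
  fix f assume f: "f \<in> hom_solutions (tree_open (tree_of p))"
  show "psol sTC_Baire p (sTC_out f)"
    using odd_hom_solution_path[OF f _ M] even_hom_solution_no_path[OF f]
    by (simp add: sTC_Baire_def sTC_out_def)
qed

section \<open>Deciding well-foundedness of arbitrary names\<close>

definition tree_violation :: "baire \<Rightarrow> nat \<Rightarrow> bool" where
  "tree_violation p c \<longleftrightarrow> 1 < p c \<or> (p (fst (prod_decode c)) = 1 \<and> p (snd (prod_decode c)) \<noteq> 1 \<and>
     prefix (list_decode (snd (prod_decode c))) (list_decode (fst (prod_decode c))))"

lemma is_tree_name_iff_no_violation: "is_tree_name p \<longleftrightarrow> (\<forall>c. \<not> tree_violation p c)"
proof
  assume p: "is_tree_name p"
  show "\<forall>c. \<not> tree_violation p c"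
  proof (intro allI notI)
    fix c assume "tree_violation p c"
    with p obtain u v where "p (list_encode u) = 1" "p (list_encode v) \<noteq> 1" "prefix v u"
      unfolding tree_violation_def is_tree_name_def
      by (metis list_decode_inverse not_less)
    then show False using p by (auto simp: is_tree_name_def tree_of_def prefix_def)
  qed
next
  assume none: "\<forall>c. \<not> tree_violation p c"
  then have "p c \<le> 1" for c by (meson not_le tree_violation_def)
  moreover have "s \<in> tree_of p" if "s @ t \<in> tree_of p" for s t
    using none[rule_format, of "prod_encode (list_encode (s @ t), list_encode s)"] that
    by (auto simp: tree_violation_def tree_of_def)
  ultimately show "is_tree_name p" by (simp add: is_tree_name_def)
qed

lemma tree_violation_local:
  "(\<And>j. j \<le> c \<Longrightarrow> p j = p' j) \<Longrightarrow> tree_violation p c \<longleftrightarrow> tree_violation p' c"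
  using prod_decode_le[of c] by (simp add: tree_violation_def)

text \<open>The tree built from an arbitrary name \<open>p\<close>: a copy of the tree named by \<open>p\<close> behind
  the root \<open>0\<close>, and one path behind the root \<open>1\<close> for every violation.\<close>

definition chi_tree :: "baire \<Rightarrow> nat list set" where
  "chi_tree p = {[], [1]} \<union> Cons 0 ` tree_of p \<union> {1 # c # replicate k 0 |c k. tree_violation p c}"

lemma nth_Cons_Cons_eq_0_iff:
  "(\<forall>i<length (a # b # \<tau>). 2 \<le> i \<longrightarrow> (a # b # \<tau>) ! i = (0::nat)) \<longleftrightarrow> (\<exists>k. \<tau> = replicate k 0)"
proof -
  have "(\<forall>i<length (a # b # \<tau>). 2 \<le> i \<longrightarrow> (a # b # \<tau>) ! i = 0) \<longleftrightarrow> (\<forall>j<length \<tau>. \<tau> ! j = 0)"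
  proof (intro iffI allI impI)
    fix j assume L: "\<forall>i<length (a # b # \<tau>). 2 \<le> i \<longrightarrow> (a # b # \<tau>) ! i = 0" and "j < length \<tau>"
    then show "\<tau> ! j = 0" using L[rule_format, of "Suc (Suc j)"] by simp
  next
    fix i assume R: "\<forall>j<length \<tau>. \<tau> ! j = 0" and "i < length (a # b # \<tau>)" "2 \<le> i"
    then have "i = Suc (Suc (i - 2))" "i - 2 < length \<tau>" by simp_all
    then show "(a # b # \<tau>) ! i = 0" using R by (metis nth_Cons_Suc)
  qed
  also have "\<dots> \<longleftrightarrow> (\<exists>k. \<tau> = replicate k 0)"
    by (metis in_set_conv_nth length_replicate nth_replicate replicate_eqI)
  finally show ?thesis .
qed

lemma mem_chi_tree:
  "\<sigma> \<in> chi_tree p \<longleftrightarrow> \<sigma> = [] \<or> \<sigma> = [1] \<or> (\<sigma> \<noteq> [] \<and> hd \<sigma> = 0 \<and> tl \<sigma> \<in> tree_of p) \<or>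
    (2 \<le> length \<sigma> \<and> \<sigma> ! 0 = 1 \<and> (\<forall>i<length \<sigma>. 2 \<le> i \<longrightarrow> \<sigma> ! i = 0) \<and> tree_violation p (\<sigma> ! 1))"
proof (cases \<sigma> rule: remdups_adj.cases)
  case (3 a b \<tau>)
  then have "(\<forall>i<length \<sigma>. 2 \<le> i \<longrightarrow> \<sigma> ! i = 0) \<longleftrightarrow> (\<exists>k. \<tau> = replicate k 0)"
    by (simp only: nth_Cons_Cons_eq_0_iff)
  then show ?thesis using 3 by (auto simp: chi_tree_def image_iff)
qed (auto simp: chi_tree_def)

lemma chi_tree_local:
  assumes "\<And>j. j \<le> list_encode \<sigma> \<Longrightarrow> p j = p' j"
  shows "\<sigma> \<in> chi_tree p \<longleftrightarrow> \<sigma> \<in> chi_tree p'"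
proof -
  have "\<sigma> \<noteq> [] \<Longrightarrow> p (list_encode (tl \<sigma>)) = p' (list_encode (tl \<sigma>))"
    using assms list_encode_tl_less[of \<sigma>] by simp
  moreover have "1 < length \<sigma> \<Longrightarrow> tree_violation p (\<sigma> ! 1) = tree_violation p' (\<sigma> ! 1)"
    using assms nth_le_list_encode[of 1 \<sigma>] by (intro tree_violation_local) simp
  ultimately show ?thesis by (auto simp: mem_chi_tree tree_of_def)
qed

lemma chi_tree_of_tree_name: "is_tree_name p \<Longrightarrow> chi_tree p = {[], [1]} \<union> Cons 0 ` tree_of p"
  by (auto simp: chi_tree_def is_tree_name_iff_no_violation)

lemma prefix_closed_chi_tree:
  assumes p: "is_tree_name p"
  shows "prefix_closed (chi_tree p)"
  unfolding prefix_closed_def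
proof (intro allI impI)
  fix s t assume "s @ t \<in> chi_tree p"
  with p show "s \<in> chi_tree p"
    by (cases s) (auto simp: chi_tree_of_tree_name is_tree_name_def Cons_eq_append_conv)
qed

lemma tree_violation_imp_chi_tree_path:
  assumes c: "tree_violation p c"
  shows "(\<lambda>i. if i = 0 then 1 else if i = 1 then c else 0) \<in> body (chi_tree p)"
proof -
  let ?x = "\<lambda>i. if i = 0 then 1 else if i = 1 then c else 0"
  have rep: "map ?x [0..<Suc (Suc k)] = 1 # c # replicate k 0" for k
    by (rule nth_equalityI) (auto simp: nth_Cons' simp del: upt_Suc)
  have "map ?x [0..<n] \<in> chi_tree p" for n
  proof (cases "n \<le> 1")
    case False
    then obtain k where "n = Suc (Suc k)" using less_imp_Suc_add[of 1 n] by auto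
    then show ?thesis using c rep[of k] by (auto simp: chi_tree_def simp del: upt_Suc)
  qed (auto simp: chi_tree_def le_Suc_eq)
  then show ?thesis by (simp add: body_def)
qed

lemma tree_path_imp_chi_tree_path:
  assumes x: "x \<in> body (tree_of p)"
  shows "(\<lambda>i. if i = 0 then 0 else x (i - 1)) \<in> body (chi_tree p)"
proof -
  let ?y = "\<lambda>i. if i = 0 then 0 else x (i - 1)"
  have "map ?y [0..<n] \<in> chi_tree p" for n
  proof (cases n)
    case (Suc m)
    have "map ?y [0..<Suc m] = 0 # map x [0..<m]"
      by (simp add: map_upt_Suc del: upt_Suc)
    moreover have "map x [0..<m] \<in> tree_of p" using x by (simp add: body_def)
    ultimately show ?thesis using Suc by (simp add: chi_tree_def)
  qed (simp add: chi_tree_def)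
  then show ?thesis by (simp add: body_def)
qed

lemma chi_tree_path_imp_tree_path:
  assumes p: "is_tree_name p" and x: "x \<in> body (chi_tree p)"
  shows "(\<lambda>i. x (Suc i)) \<in> body (tree_of p)"
proof -
  have "map x [0..<Suc (Suc n)] \<in> chi_tree p" for n
    using x unfolding body_def by blast
  moreover have "map x [0..<Suc (Suc n)] = x 0 # map (\<lambda>i. x (Suc i)) [0..<Suc n]" for n
    by (simp add: map_upt_Suc del: upt_Suc)
  ultimately have tail: "map (\<lambda>i. x (Suc i)) [0..<Suc n] \<in> tree_of p" for n
    using p by (force simp: chi_tree_of_tree_name simp del: upt_Suc)
  have "map (\<lambda>i. x (Suc i)) [0..<n] \<in> tree_of p" for n
    using prefix_closed_take[OF prefix_closed_tree_of[OF p] tail, of n n]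
    by (simp add: take_map del: upt_Suc)
  then show ?thesis by (simp add: body_def)
qed

lemma body_chi_tree_eq_empty_iff: "body (chi_tree p) = {} \<longleftrightarrow> p \<in> WF_trees"
proof
  assume empty: "body (chi_tree p) = {}"
  then have "is_tree_name p"
    using tree_violation_imp_chi_tree_path is_tree_name_iff_no_violation by blast
  moreover have "body (tree_of p) = {}"
    using empty tree_path_imp_chi_tree_path by blast
  ultimately show "p \<in> WF_trees" by (simp add: WF_trees_def)
next
  assume "p \<in> WF_trees"
  then show "body (chi_tree p) = {}"
    using chi_tree_path_imp_tree_path by (fastforce simp: WF_trees_def)
qed

definition tree_violation_prog :: nexp where
  "tree_violation_prog = OrE (Lt (K 1) (NthE (V 2) (V 0)))
     (AndE (EqE (NthE (V 2) (FstE (V 0))) (K 1))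
       (AndE (NotE (EqE (NthE (V 2) (SndE (V 0))) (K 1)))
         (AndE (LeE (LenE (SndE (V 0))) (LenE (FstE (V 0))))
           (AllE (LenE (SndE (V 0))) (EqE (NthE (SndE (V 1)) (V 0)) (NthE (FstE (V 1)) (V 0)))))))"

definition chi_tree_prog :: nexp where
  "chi_tree_prog = OrE (EqE (V 0) (K 0))
     (OrE (AndE (EqE (LenE (V 0)) (K 1)) (EqE (NthE (V 0) (K 0)) (K 1)))
       (OrE (AndE (Lt (K 0) (LenE (V 0)))
              (AndE (EqE (NthE (V 0) (K 0)) (K 0)) (EqE (NthE (V 1) (TlE (V 0))) (K 1))))
         (AndE (LeE (K 2) (LenE (V 0))) (AndE (EqE (NthE (V 0) (K 0)) (K 1))
           (AndE (AllE (LenE (V 0)) (OrE (Lt (V 0) (K 2)) (EqE (NthE (V 1) (V 0)) (K 0))))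
             (Let (NthE (V 0) (K 1)) tree_violation_prog))))))"

lemma eval_tree_violation_prog:
  "(eval tree_violation_prog (c' # c # w # rest) \<noteq> 0) \<longleftrightarrow> tree_violation (code_nth w) c'"
  by (auto simp: tree_violation_prog_def tree_violation_def prefix_iff_nth code_length_def
      code_nth_eq)

lemma eval_chi_tree_prog:
  "(eval chi_tree_prog (c # w # rest) \<noteq> 0) \<longleftrightarrow> list_decode c \<in> chi_tree (code_nth w)"
proof -
  let ?s = "list_decode c"
  have empty: "c = 0 \<longleftrightarrow> ?s = []" by (simp add: list_decode_eq_Nil_iff)
  have one: "code_length c = 1 \<and> code_nth c 0 = 1 \<longleftrightarrow> ?s = [1]"
    by (auto simp: code_length_def code_nth_eq length_Suc_conv)
  have tree: "0 < code_length c \<and> code_nth c 0 = 0 \<and> code_nth w (code_tl c) = 1 \<longleftrightarrow>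
      ?s \<noteq> [] \<and> hd ?s = 0 \<and> tl ?s \<in> tree_of (code_nth w)"
    by (auto simp: code_length_def code_nth_eq hd_conv_nth code_tl_def tree_of_def)
  have violation: "2 \<le> code_length c \<and> code_nth c 0 = 1 \<and> (\<forall>i<code_length c. i < 2 \<or> code_nth c i = 0) \<and>
      tree_violation (code_nth w) (code_nth c 1) \<longleftrightarrow>
      2 \<le> length ?s \<and> ?s ! 0 = 1 \<and> (\<forall>i<length ?s. 2 \<le> i \<longrightarrow> ?s ! i = 0) \<and>
      tree_violation (code_nth w) (?s ! 1)"
  proof (cases "2 \<le> length ?s")
    case True
    then have "0 < length ?s" "1 < length ?s" by linarith+
    then have "code_nth c 0 = ?s ! 0" "code_nth c 1 = ?s ! 1" by (simp_all only: code_nth_eq)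
    with True show ?thesis by (auto simp: code_length_def code_nth_eq)
  qed (simp add: code_length_def)
  have "(eval chi_tree_prog (c # w # rest) \<noteq> 0) \<longleftrightarrow> c = 0 \<or>
      (code_length c = 1 \<and> code_nth c 0 = 1) \<or>
      (0 < code_length c \<and> code_nth c 0 = 0 \<and> code_nth w (code_tl c) = 1) \<or>
      (2 \<le> code_length c \<and> code_nth c 0 = 1 \<and> (\<forall>i<code_length c. i < 2 \<or> code_nth c i = 0) \<and>
        tree_violation (code_nth w) (code_nth c 1))"
    using eval_tree_violation_prog by (simp add: chi_tree_prog_def) blast
  then show ?thesis unfolding empty one tree violation by (simp add: mem_chi_tree)
qed

lemma decides_chi_tree_prog: "n < k \<Longrightarrow> decides chi_tree_prog (chi_tree p) n (prefix_code p k)"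
  unfolding decides_def
proof (intro allI impI)
  fix c rest assume "n < k" "c \<le> n"
  then have "list_decode c \<in> chi_tree (code_nth (prefix_code p k)) \<longleftrightarrow> list_decode c \<in> chi_tree p"
    by (intro chi_tree_local) simp
  then show "(eval chi_tree_prog (c # prefix_code p k # rest) \<noteq> 0) = (list_decode c \<in> chi_tree p)"
    using eval_chi_tree_prog[of c "prefix_code p k" rest] by simp
qed

definition chi_out :: "baire \<Rightarrow> baire" where
  "chi_out f n = (if even (f 0) then 1 else 0)"

definition chi_out_prog :: nexp where
  "chi_out_prog = Let (FstE (V 0)) (Let (SndE (V 1))
     (If (Lt (LenE (V 0)) (K 2)) (K 0) (Add (K 1) (EvenE (NthE (V 0) (K 1))))))"

lemma assoc_val_chi_out_prog: "assoc_val (\<lambda>x. eval chi_out_prog [x]) (bpair p f) (chi_out f)"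
proof (rule assoc_valI[where N = "\<lambda>n. 2"])
  fix n k
  have "2 \<le> k \<Longrightarrow> code_nth (prefix_code (bpair p f) k) 1 = f 0"
    by (simp add: bpair_def)
  then show "assoc_out (\<lambda>x. eval chi_out_prog [x]) (bpair p f) n k =
      (if k < 2 then 0 else Suc (chi_out f n))"
    by (simp add: assoc_out_def chi_out_prog_def chi_out_def)
qed

theorem chi_Pi11_le_FindHS: "chi_Pi11 \<le>\<^sub>W FindHS_Sigma01"
proof (rule weihrauch_le_FindHS_via_tree_open[where M = chi_tree and Mb = chi_tree_prog
      and Out = chi_out_prog and out = chi_out])
  show "wf_nexp chi_tree_prog 2" "wf_nexp chi_out_prog 1"
    by (simp_all add: chi_tree_prog_def tree_violation_prog_def chi_out_prog_def)
  show "decides chi_tree_prog (chi_tree p) n (prefix_code p k)" if "n < k" for p n k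
    using that by (rule decides_chi_tree_prog)
  show "assoc_val (\<lambda>x. eval chi_out_prog [x]) (bpair p f) (chi_out f)" for p f
    by (rule assoc_val_chi_out_prog)
  show "prefix_closed (chi_tree p) \<or> body (chi_tree p) \<noteq> {}" for p
    using prefix_closed_chi_tree body_chi_tree_eq_empty_iff by (auto simp: WF_trees_def)
  fix p f assume f: "f \<in> hom_solutions (tree_open (chi_tree p))"
  have "odd (f 0) \<Longrightarrow> p \<notin> WF_trees"
    using odd_hom_solution_path[OF f] prefix_closed_chi_tree body_chi_tree_eq_empty_iff
    by (auto simp: WF_trees_def)
  then show "psol chi_Pi11 p (chi_out f)"
    using even_hom_solution_no_path[OF f] body_chi_tree_eq_empty_iff
    by (auto simp: chi_Pi11_def chi_out_def)
qed

section \<open>Finding homogeneous solutions is not reducible to \<open>\<chi>\<^sub>\<Pi>\<^sub>1\<^sub>1\<close>\<close>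

definition bit_name :: "nat \<Rightarrow> baire" where
  "bit_name b n = (if n = 0 then b else 0)"

definition one_bit_solver :: "(nat \<Rightarrow> nat) \<Rightarrow> bool" where
  "one_bit_solver \<beta> \<longleftrightarrow> (\<forall>p. hom_solutions (open_named p) \<noteq> {} \<longrightarrow>
     (\<exists>b r. b \<le> 1 \<and> assoc_val \<beta> (bpair p (bit_name b)) r \<and> r \<in> hom_solutions (open_named p)))"

text \<open>Answer every instance of \<open>\<chi>\<^sub>\<Pi>\<^sub>1\<^sub>1\<close> by the name \<open>bit_name\<close> of the correct bit;
  the backward functional of a reduction then solves \<open>FindHS\<close> from the instance and one bit.\<close>

lemma FindHS_le_chi_imp_one_bit_solver:
  assumes "FindHS_Sigma01 \<le>\<^sub>W chi_Pi11"
  shows "\<exists>\<beta>. one_bit_solver \<beta>"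
proof -
  obtain \<alpha> \<beta> where red: "\<forall>G. realizes G chi_Pi11 \<longrightarrow>
      (\<forall>p\<in>pdom FindHS_Sigma01. \<exists>q. assoc_val \<alpha> p q \<and> q \<in> pdom chi_Pi11 \<and>
        (\<exists>r. assoc_val \<beta> (bpair p (G q)) r \<and> psol FindHS_Sigma01 p r))"
    using assms unfolding weihrauch_le_def by blast
  define bit where "bit q = (if q \<in> WF_trees then 1 else 0 :: nat)" for q
  have "realizes (\<lambda>q. bit_name (bit q)) chi_Pi11"
    by (simp add: realizes_def chi_Pi11_def bit_def bit_name_def)
  then have red': "\<forall>p\<in>pdom FindHS_Sigma01. \<exists>q r. assoc_val \<beta> (bpair p (bit_name (bit q))) r \<and>
      psol FindHS_Sigma01 p r"
    using red by blast
  have "one_bit_solver \<beta>" unfolding one_bit_solver_def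
  proof (intro allI impI)
    fix p assume "hom_solutions (open_named p) \<noteq> {}"
    then have "p \<in> pdom FindHS_Sigma01" by (simp add: FindHS_Sigma01_def)
    then obtain q r where "assoc_val \<beta> (bpair p (bit_name (bit q))) r" "psol FindHS_Sigma01 p r"
      using red' by blast
    then show "\<exists>b r. b \<le> 1 \<and> assoc_val \<beta> (bpair p (bit_name b)) r \<and> r \<in> hom_solutions (open_named p)"
      by (intro exI[of _ "bit q"] exI[of _ r]) (simp add: bit_def FindHS_Sigma01_def)
  qed
  then show ?thesis by blast
qed

lemma prefix_code_cong:
  assumes "\<And>i. i < k \<Longrightarrow> u' i = u i"
  shows "prefix_code u' k = prefix_code u k"
proof -
  have "map u' [0..<k] = map u [0..<k]" using assms by (intro map_cong) auto
  then show ?thesis by (simp only: prefix_code_def)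
qed

lemma assoc_val_continuous_at_0:
  assumes "assoc_val \<beta> u r"
  obtains N where "\<And>u' r'. (\<forall>i<N. u' i = u i) \<Longrightarrow> assoc_val \<beta> u' r' \<Longrightarrow> r' 0 = r 0"
proof -
  obtain k where k: "0 < assoc_out \<beta> u 0 k" "\<forall>j<k. assoc_out \<beta> u 0 j = 0"
      "r 0 = assoc_out \<beta> u 0 k - 1"
    using assms unfolding assoc_val_def by blast
  have "r' 0 = r 0" if u': "\<forall>i<k. u' i = u i" and r': "assoc_val \<beta> u' r'" for u' r'
  proof -
    have same: "j \<le> k \<Longrightarrow> assoc_out \<beta> u' 0 j = assoc_out \<beta> u 0 j" for j
      unfolding assoc_out_def using u' by (subst prefix_code_cong[of j u' u]) auto
    obtain k' where k': "0 < assoc_out \<beta> u' 0 k'" "\<forall>j<k'. assoc_out \<beta> u' 0 j = 0"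
        "r' 0 = assoc_out \<beta> u' 0 k' - 1"
      using r' unfolding assoc_val_def by blast
    have "k' = k"
      using k k' same by (metis less_imp_le_nat less_not_refl linorder_neqE_nat order_refl)
    then show ?thesis using k k' same by simp
  qed
  then show ?thesis using that by blast
qed

lemma one_bit_answer_locked:
  assumes "assoc_val \<beta> (bpair x (bit_name b)) r"
  obtains N where "\<And>x' r'. (\<forall>i<N. x' i = x i) \<Longrightarrow> assoc_val \<beta> (bpair x' (bit_name b)) r' \<Longrightarrow> r' 0 = r 0"
proof -
  obtain N where "\<And>u' r'. (\<forall>i<N. u' i = bpair x (bit_name b) i) \<Longrightarrow> assoc_val \<beta> u' r' \<Longrightarrow> r' 0 = r 0"
    using assoc_val_continuous_at_0[OF assms] by blast
  moreover have "\<forall>i<N. bpair x' g i = bpair x g i" if "\<forall>i<N. x' i = x i" for x' g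
    using that by (simp add: bpair_def)
  ultimately show ?thesis using that by blast
qed

lemma mem_open_named:
  "h \<in> open_named y \<longleftrightarrow> h \<in> ramsey \<and> (\<exists>s\<in>listed_strings y. map h [0..<length s] = s)"
  unfolding open_named_def cone_def by auto

lemma hom_solution_ge:
  assumes listed: "\<forall>s\<in>listed_strings y. length s = 2 \<and> (s ! 0 < m \<longrightarrow> s ! 1 < m)"
    and f: "f \<in> hom_solutions (open_named y)"
  shows "m \<le> f 0"
proof (rule ccontr)
  assume "\<not> m \<le> f 0"
  txt \<open>Then \<open>f \<circ> g\<close> with \<open>g = 0, m + 1, m + 2, \<dots>\<close> begins with a listed pair
    \<open>[f 0, f (m + 1)]\<close> leading from below \<open>m\<close> to above \<open>m\<close>.\<close>
  define g where "g n = (if n = 0 then 0 else m + n)" for n :: nat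
  have "strict_mono g" unfolding strict_mono_def g_def by auto
  then have "f \<circ> g \<in> open_named y" using hom_solutions_comp[OF f] by (simp add: ramsey_def)
  then obtain s where s: "s \<in> listed_strings y" "map (f \<circ> g) [0..<length s] = s"
    by (auto simp: mem_open_named)
  then have "s ! 0 = f 0" "s ! 1 = f (m + 1)" "length s = 2"
    using map_upt_eq_nth[OF s(2), of 0] map_upt_eq_nth[OF s(2), of 1] listed
    by (simp_all add: g_def)
  then have "f (m + 1) < m" using listed s(1) \<open>\<not> m \<le> f 0\<close> by auto
  moreover have "m + 1 \<le> f (m + 1)"
    using f strict_mono_imp_increasing by (simp add: HS_def homogeneous_def ramsey_def)
  ultimately show False by simp
qed

definition extend_name :: "baire \<Rightarrow> nat \<Rightarrow> nat \<Rightarrow> baire" where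
  "extend_name x N m i =
     (if i < N then x i else if \<exists>a b. list_decode i = [a, b] \<and> m \<le> a then Suc i else 0)"

lemma listed_strings_extend_name:
  "s \<in> listed_strings (extend_name x N m) \<longleftrightarrow>
    (\<exists>i<N. x i = Suc (list_encode s)) \<or> (N \<le> list_encode s \<and> (\<exists>a b. s = [a, b] \<and> m \<le> a))"
proof
  assume "s \<in> listed_strings (extend_name x N m)"
  then obtain i where i: "extend_name x N m i = Suc (list_encode s)"
    by (auto simp: listed_strings_def)
  show "(\<exists>i<N. x i = Suc (list_encode s)) \<or> (N \<le> list_encode s \<and> (\<exists>a b. s = [a, b] \<and> m \<le> a))"
  proof (cases "i < N")
    case True
    then have "x i = Suc (list_encode s)" using i by (simp add: extend_name_def)
    then show ?thesis using True by blast
  next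
    case False
    then have "(\<exists>a b. list_decode i = [a, b] \<and> m \<le> a) \<and> i = list_encode s"
      using i by (auto simp: extend_name_def split: if_splits)
    then show ?thesis using False by auto
  qed
next
  assume "(\<exists>i<N. x i = Suc (list_encode s)) \<or> (N \<le> list_encode s \<and> (\<exists>a b. s = [a, b] \<and> m \<le> a))"
  then show "s \<in> listed_strings (extend_name x N m)"
    unfolding listed_strings_def mem_Collect_eq
  proof
    assume "\<exists>i<N. x i = Suc (list_encode s)"
    then obtain i where "i < N" "x i = Suc (list_encode s)" by blast
    then show "\<exists>i. extend_name x N m i = Suc (list_encode s)"
      by (intro exI[of _ i]) (simp add: extend_name_def)
  next
    assume "N \<le> list_encode s \<and> (\<exists>a b. s = [a, b] \<and> m \<le> a)"
    then show "\<exists>i. extend_name x N m i = Suc (list_encode s)"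
      by (intro exI[of _ "list_encode s"]) (auto simp: extend_name_def)
  qed
qed

definition only_pairs :: "baire \<Rightarrow> bool" where
  "only_pairs x \<longleftrightarrow> (\<forall>s\<in>listed_strings x. length s = 2)"

lemma only_pairs_extend_name:
  assumes "only_pairs x"
  shows "only_pairs (extend_name x N m)"
  unfolding only_pairs_def
proof
  fix s assume "s \<in> listed_strings (extend_name x N m)"
  then have "s \<in> listed_strings x \<or> (\<exists>a b. s = [a, b])"
    unfolding listed_strings_extend_name by (auto simp: listed_strings_def)
  then show "length s = 2" using assms by (auto simp: only_pairs_def)
qed

lemma extend_name_solution:
  assumes "N \<le> m"
  shows "(\<lambda>i. m + i) \<in> hom_solutions (open_named (extend_name x N m))"
proof (rule hom_solutionsI)
  show "(\<lambda>i. m + i) \<in> ramsey" by (simp add: ramsey_def strict_mono_def)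
  fix g assume g: "g \<in> ramsey"
  let ?s = "[m + g 0, m + g 1]"
  have "m + g 0 \<le> list_encode ?s" using nth_le_list_encode[of 0 ?s] by simp
  then have "?s \<in> listed_strings (extend_name x N m)"
    using assms by (simp add: listed_strings_extend_name)
  moreover have "map ((\<lambda>i. m + i) \<circ> g) [0..<length ?s] = ?s"
    by (simp add: numeral_2_eq_2)
  moreover have "(\<lambda>i. m + i) \<circ> g \<in> ramsey"
    using g by (simp add: ramsey_def strict_mono_def)
  ultimately show "(\<lambda>i. m + i) \<circ> g \<in> open_named (extend_name x N m)"
    unfolding mem_open_named
    by (intro conjI bexI[where P = "\<lambda>s. map ((\<lambda>i. m + i) \<circ> g) [0..<length s] = s"])
qed

lemma extend_name_listed_bound:
  assumes x: "only_pairs x" and small: "\<forall>i<N. x i < m"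
  shows "\<forall>s\<in>listed_strings (extend_name x N m). length s = 2 \<and> (s ! 0 < m \<longrightarrow> s ! 1 < m)"
proof
  fix s assume s: "s \<in> listed_strings (extend_name x N m)"
  have "length s = 2" using only_pairs_extend_name[OF x] s by (simp add: only_pairs_def)
  moreover have "s ! 1 < m" if "\<exists>i<N. x i = Suc (list_encode s)"
    using that small nth_le_list_encode[of 1 s] \<open>length s = 2\<close> by fastforce
  ultimately show "length s = 2 \<and> (s ! 0 < m \<longrightarrow> s ! 1 < m)"
    using s by (auto simp: listed_strings_extend_name)
qed

lemma one_bit_solver_large_answer:
  assumes \<beta>: "one_bit_solver \<beta>" and x: "only_pairs x"
  shows "\<exists>x' b r. only_pairs x' \<and> (\<forall>i<N. x' i = x i) \<and> b \<le> 1 \<and>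
    assoc_val \<beta> (bpair x' (bit_name b)) r \<and> c < r 0"
proof -
  define m where "m = N + (\<Sum>i<N. x i) + c + 1"
  have "x i < m" if "i < N" for i
    using that member_le_sum[of i "{..<N}" x] by (simp add: m_def)
  then have listed: "\<forall>s\<in>listed_strings (extend_name x N m). length s = 2 \<and> (s ! 0 < m \<longrightarrow> s ! 1 < m)"
    using extend_name_listed_bound[OF x] by blast
  have "N \<le> m" by (simp add: m_def)
  then obtain b r where "b \<le> 1" "assoc_val \<beta> (bpair (extend_name x N m) (bit_name b)) r"
      and r: "r \<in> hom_solutions (open_named (extend_name x N m))"
    using \<beta> extend_name_solution unfolding one_bit_solver_def by blast
  moreover have "c < r 0"
    using hom_solution_ge[OF listed r] by (simp add: m_def)
  moreover have "\<forall>i<N. extend_name x N m i = x i" by (simp add: extend_name_def)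
  ultimately show ?thesis using only_pairs_extend_name[OF x] by blast
qed

text \<open>Three rounds of the adversary against a solver that reads a single bit: each round
  extends the committed part past the point where the earlier answers are locked and forces
  a larger answer, so the three bits must be pairwise distinct.\<close>

lemma no_one_bit_solver: "\<not> one_bit_solver \<beta>"
proof
  assume \<beta>: "one_bit_solver \<beta>"
  have "only_pairs (\<lambda>_. 0)" by (simp add: only_pairs_def listed_strings_def)
  then obtain x1 b1 r1 where x1: "only_pairs x1" "b1 \<le> 1" "assoc_val \<beta> (bpair x1 (bit_name b1)) r1"
    using one_bit_solver_large_answer[OF \<beta>, where x = "\<lambda>_. 0" and N = 0 and c = 0] by auto
  obtain K1 where K1: "\<And>x' r'. \<forall>i<K1. x' i = x1 i \<Longrightarrow>
      assoc_val \<beta> (bpair x' (bit_name b1)) r' \<Longrightarrow> r' 0 = r1 0"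
    using one_bit_answer_locked[OF x1(3)] by blast
  obtain x2 b2 r2 where x2: "only_pairs x2" "\<forall>i<K1. x2 i = x1 i" "b2 \<le> 1"
      "assoc_val \<beta> (bpair x2 (bit_name b2)) r2" "r1 0 < r2 0"
    using one_bit_solver_large_answer[OF \<beta> x1(1), where N = K1 and c = "r1 0"] by auto
  obtain K2 where K2: "\<And>x' r'. \<forall>i<K2. x' i = x2 i \<Longrightarrow>
      assoc_val \<beta> (bpair x' (bit_name b2)) r' \<Longrightarrow> r' 0 = r2 0"
    using one_bit_answer_locked[OF x2(4)] by blast
  obtain x3 b3 r3 where x3: "\<forall>i<max K1 K2. x3 i = x2 i" "b3 \<le> 1"
      "assoc_val \<beta> (bpair x3 (bit_name b3)) r3" "r1 0 + r2 0 < r3 0"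
    using one_bit_solver_large_answer[OF \<beta> x2(1), where N = "max K1 K2" and c = "r1 0 + r2 0"]
    by auto
  have "b2 \<noteq> b1" using K1[OF x2(2)] x2(4,5) by force
  moreover have "b3 \<noteq> b1" using K1[of x3 r3] x2(2) x3 by force
  moreover have "b3 \<noteq> b2" using K2[of x3 r3] x3 by force
  ultimately show False using x1(2) x2(3) x3(2) by linarith
qed

theorem not_FindHS_le_chi: "\<not> FindHS_Sigma01 \<le>\<^sub>W chi_Pi11"
  using FindHS_le_chi_imp_one_bit_solver no_one_bit_solver by blast

theorem mainTheorem11:
  shows "sTC_Baire \<le>\<^sub>W FindHS_Sigma01 \<and> chi_Pi11 <\<^sub>W FindHS_Sigma01"
  using sTC_Baire_le_FindHS chi_Pi11_le_FindHS not_FindHS_le_chi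
  by (simp add: weihrauch_less_def)

end
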